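(* (1) The canonical projection $\pi\colon\mathrm{Aut}(\mathbb U)\to\mathrm{Aut}(\mathbb Q_{\ge0})$, $f\mapsto D_f$, is a continuous open surjective homomorphism with kernel $\mathrm{Iso}(\mathbb U)$ that admits a continuous homomorphism $s\colon\mathrm{Aut}(\mathbb Q_{\ge0})\to\mathrm{Aut}(\mathbb U)$ with $\pi\circ s=\mathrm{id}$, and hence induces an isomorphism of topological groups $\mathrm{Aut}(\mathbb U)\cong\mathrm{Iso}(\mathbb U)\rtimes\mathrm{Aut}(\mathbb Q_{\ge0})$, $(n,h)\mapsto n\,s(h)$. (2) Likewise the canonical projection $\bar\pi\colon\mathrm{Aut}_M(\overline{\mathbb U})\to\mathrm{Aut}(\mathbb Q_{\ge0})$ induces an isomorphism of topological groups $\mathrm{Aut}_M(\overline{\mathbb U})\cong\mathrm{Iso}_M(\overline{\mathbb U})\rtimes\mathrm{Aut}(\mathbb Q_{\ge0})$. In particular, the short exact sequences $1\to\mathrm{Iso}(\mathbb U)\to\mathrm{Aut}(\mathbb U)\to\mathrm{Aut}(\mathbb Q_{\ge0})\to1$ and $1\to\mathrm{Iso}_M(\overline{\mathbb U})\to\mathrm{Aut}_M(\overline{\mathbb U})\to\mathrm{Aut}(\mathbb Q_{\ge0})\to1$ split.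
   Context: $\mathbb U$ is the countable rational Urysohn ultrametric space viewed as a two-sorted ultrametric space with distance set $\mathbb Q_{\ge0}$, and $\overline{\mathbb U}$ is its Cauchy completion. A dc-automorphism is a bijection $f$ of points with an order automorphism $D_f$ of $\mathbb Q_{\ge0}$ such that $d(f(x),f(y))=D_f(d(x,y))$; isometries are those with $D_f=\mathrm{id}$. $\mathrm{Aut}(\mathbb U)$ is the group of dc-automorphisms with the topology of pointwise convergence on both sorts (basic neighbourhoods: agreement with $f$ on finitely many points and distances), $\mathrm{Iso}(\mathbb U)$ its subgroup of isometries. $\mathrm{Aut}_M(\overline{\mathbb U})$ is the dc-automorphism group of $\overline{\mathbb U}$ with basic neighbourhoods $\{g:d(g(x),f(x))<r\ \forall x\in A\}$, $A$ finite, $r>0$, and $\mathrm{Iso}_M(\overline{\mathbb U})$ its subgroup of isometries; $\mathrm{Aut}(\mathbb Q_{\ge0})$ has pointwise convergence topology. The semidirect product $N\rtimes H$ is $N\times H$ with the product topology and multiplication $(n,h)(n',h')=(n\,s(h)n's(h)^{-1},hh')$. *)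

theory Defs
  imports "HOL-Analysis.Analysis"
begin

definition Qnn :: "rat set" where
  "Qnn = {q. 0 \<le> q}"

text \<open>Convention: they are
  extended by the identity on negative rationals, so that each automorphism
  has a unique representative as a total function on rat.\<close>
definition autQ :: "(rat \<Rightarrow> rat) set" where
  "autQ = {D. bij_betw D Qnn Qnn
             \<and> (\<forall>p\<in>Qnn. \<forall>q\<in>Qnn. p \<le> q \<longleftrightarrow> D p \<le> D q)
             \<and> (\<forall>q. q < 0 \<longrightarrow> D q = q)}"

definition autQ_topology :: "(rat \<Rightarrow> rat) topology" where
  "autQ_topology = topology_generated_by
     {{D \<in> autQ. \<forall>q\<in>B. D q = D0 q} | D0 B. D0 \<in> autQ \<and> finite B \<and> B \<subseteq> Qnn}"

definition ultrametric :: "('a \<Rightarrow> 'a \<Rightarrow> rat) \<Rightarrow> bool" where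
  "ultrametric d \<longleftrightarrow>
     (\<forall>x y. 0 \<le> d x y) \<and> (\<forall>x y. d x y = 0 \<longleftrightarrow> x = y) \<and> (\<forall>x y. d x y = d y x)
     \<and> (\<forall>x y z. d x z \<le> max (d x y) (d y z))"

text \<open>The countable rational Urysohn ultrametric space (on the whole type):
  a countable ultrametric space with rational distances having the one-point
  extension property for all finite ultrametric spaces with rational distances
  (this characterizes it up to isometry, as the Fraisse limit).\<close>
definition rational_urysohn_ultrametric :: "('a \<Rightarrow> 'a \<Rightarrow> rat) \<Rightarrow> bool" where
  "rational_urysohn_ultrametric d \<longleftrightarrow>
     countable (UNIV :: 'a set) \<and> ultrametric d \<and>
     (\<forall>A r. finite A \<and> (\<forall>a\<in>A. 0 < r a)
        \<and> (\<forall>a\<in>A. \<forall>b\<in>A. d a b \<le> max (r a) (r b) \<and> r a \<le> max (d a b) (r b))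
        \<longrightarrow> (\<exists>z. \<forall>a\<in>A. d z a = r a))"

definition cauchy_seq_rat :: "('b \<Rightarrow> 'b \<Rightarrow> rat) \<Rightarrow> (nat \<Rightarrow> 'b) \<Rightarrow> bool" where
  "cauchy_seq_rat e x \<longleftrightarrow> (\<forall>\<epsilon>>0. \<exists>N. \<forall>m\<ge>N. \<forall>n\<ge>N. e (x m) (x n) < \<epsilon>)"

definition converges_rat :: "('b \<Rightarrow> 'b \<Rightarrow> rat) \<Rightarrow> (nat \<Rightarrow> 'b) \<Rightarrow> 'b \<Rightarrow> bool" where
  "converges_rat e x y \<longleftrightarrow> (\<forall>\<epsilon>>0. \<exists>N. \<forall>n\<ge>N. e (x n) y < \<epsilon>)"

text \<open>(e, j) is a Cauchy completion of d: e is a complete ultrametric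
  (its distances lie in Q>=0, as they do for the completion of an ultrametric
  space with distances in Q>=0), j is an isometric embedding with dense image.\<close>
definition is_completion ::
  "('a \<Rightarrow> 'a \<Rightarrow> rat) \<Rightarrow> ('b \<Rightarrow> 'b \<Rightarrow> rat) \<Rightarrow> ('a \<Rightarrow> 'b) \<Rightarrow> bool" where
  "is_completion d e j \<longleftrightarrow>
     ultrametric e
     \<and> (\<forall>x. cauchy_seq_rat e x \<longrightarrow> (\<exists>y. converges_rat e x y))
     \<and> (\<forall>x y. e (j x) (j y) = d x y)
     \<and> (\<forall>y. \<forall>\<epsilon>>0. \<exists>x. e (j x) y < \<epsilon>)"

definition dc_aut :: "('a \<Rightarrow> 'a \<Rightarrow> rat) \<Rightarrow> (('a \<Rightarrow> 'a) \<times> (rat \<Rightarrow> rat)) set" where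
  "dc_aut d = {(f, D). bij f \<and> D \<in> autQ \<and> (\<forall>x y. d (f x) (f y) = D (d x y))}"

definition dc_iso :: "('a \<Rightarrow> 'a \<Rightarrow> rat) \<Rightarrow> (('a \<Rightarrow> 'a) \<times> (rat \<Rightarrow> rat)) set" where
  "dc_iso d = {p \<in> dc_aut d. snd p = id}"

definition dc_mult ::
  "('a \<Rightarrow> 'a) \<times> (rat \<Rightarrow> rat) \<Rightarrow> ('a \<Rightarrow> 'a) \<times> (rat \<Rightarrow> rat) \<Rightarrow> ('a \<Rightarrow> 'a) \<times> (rat \<Rightarrow> rat)" where
  "dc_mult p q = (fst p \<circ> fst q, snd p \<circ> snd q)"

definition dc_inv :: "('a \<Rightarrow> 'a) \<times> (rat \<Rightarrow> rat) \<Rightarrow> ('a \<Rightarrow> 'a) \<times> (rat \<Rightarrow> rat)" where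
  "dc_inv p = (inv (fst p), \<lambda>q. if 0 \<le> q then inv_into Qnn (snd p) q else q)"

definition aut_topology :: "('a \<Rightarrow> 'a \<Rightarrow> rat) \<Rightarrow> (('a \<Rightarrow> 'a) \<times> (rat \<Rightarrow> rat)) topology" where
  "aut_topology d = topology_generated_by
     {{p \<in> dc_aut d. (\<forall>x\<in>A. fst p x = fst p0 x) \<and> (\<forall>q\<in>B. snd p q = snd p0 q)}
       | p0 A B. p0 \<in> dc_aut d \<and> finite A \<and> finite B \<and> B \<subseteq> Qnn}"

definition autM_topology :: "('b \<Rightarrow> 'b \<Rightarrow> rat) \<Rightarrow> (('b \<Rightarrow> 'b) \<times> (rat \<Rightarrow> rat)) topology" where
  "autM_topology e = topology_generated_by
     {{p \<in> dc_aut e. \<forall>x\<in>A. e (fst p x) (fst p0 x) < r}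
       | p0 A r. p0 \<in> dc_aut e \<and> finite A \<and> 0 < r}"

text \<open>Multiplication of N \<rtimes> H given the section s:
  (n,h)(n',h') = (n s(h) n' s(h)^-1, h h').\<close>
definition sd_mult ::
  "((rat \<Rightarrow> rat) \<Rightarrow> ('a \<Rightarrow> 'a) \<times> (rat \<Rightarrow> rat))
   \<Rightarrow> (('a \<Rightarrow> 'a) \<times> (rat \<Rightarrow> rat)) \<times> (rat \<Rightarrow> rat)
   \<Rightarrow> (('a \<Rightarrow> 'a) \<times> (rat \<Rightarrow> rat)) \<times> (rat \<Rightarrow> rat)
   \<Rightarrow> (('a \<Rightarrow> 'a) \<times> (rat \<Rightarrow> rat)) \<times> (rat \<Rightarrow> rat)" where
  "sd_mult s x y =
     (dc_mult (dc_mult (fst x) (s (snd x))) (dc_mult (fst y) (dc_inv (s (snd x)))),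
      snd x \<circ> snd y)"

definition projection_splits ::
  "('a \<Rightarrow> 'a \<Rightarrow> rat) \<Rightarrow> (('a \<Rightarrow> 'a) \<times> (rat \<Rightarrow> rat)) topology \<Rightarrow> bool" where
  "projection_splits d T \<longleftrightarrow>
     continuous_map T autQ_topology snd
     \<and> open_map T autQ_topology snd
     \<and> snd ` dc_aut d = autQ
     \<and> (\<forall>p\<in>dc_aut d. \<forall>q\<in>dc_aut d. snd (dc_mult p q) = snd p \<circ> snd q)
     \<and> {p \<in> dc_aut d. snd p = id} = dc_iso d
     \<and> (\<exists>s. s \<in> autQ \<rightarrow> dc_aut d
          \<and> continuous_map autQ_topology T s
          \<and> (\<forall>h\<in>autQ. \<forall>h'\<in>autQ. s (h \<circ> h') = dc_mult (s h) (s h'))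
          \<and> (\<forall>h\<in>autQ. snd (s h) = h)
          \<and> homeomorphic_map (prod_topology (subtopology T (dc_iso d)) autQ_topology) T
              (\<lambda>x. dc_mult (fst x) (s (snd x)))
          \<and> (\<forall>x\<in>dc_iso d \<times> autQ. \<forall>y\<in>dc_iso d \<times> autQ.
               dc_mult (fst (sd_mult s x y)) (s (snd (sd_mult s x y)))
                 = dc_mult (dc_mult (fst x) (s (snd x))) (dc_mult (fst y) (s (snd y)))))"

end

theory Submission
  imports Defs
begin

text \<open>
  The countable rational Urysohn ultrametric space U has a concrete model: the finitely supported
  functions from the positive rationals to \<open>\<nat>\<close>, the distance of \<open>x \<noteq> y\<close> being the largest
  point where they differ. An order automorphism \<open>h\<close> of the nonnegative rationals acts on the
  model by \<open>x \<mapsto> x \<circ> h\<^sup>-\<^sup>1\<close>, and this action transforms every distance by \<open>h\<close>. Transported to U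
  along an isometry found by back and forth, it becomes a homomorphic section \<open>s\<close> of the
  projection \<open>f \<mapsto> D\<^sub>f\<close>. The section is continuous because \<open>s(h)\<close> moves a point depending only on
  the values of \<open>h\<close> on the finite support of its model. Back and forth also shows that the
  projection is open: a finite partial map that transforms distances by \<open>h'\<close> extends to a
  dc-automorphism over \<open>h'\<close>. As all groups involved are topological groups, \<open>(n, h) \<mapsto> n s(h)\<close>
  is then a homeomorphism, with inverse \<open>f \<mapsto> (f s(D\<^sub>f)\<^sup>-\<^sup>1, D\<^sub>f)\<close>.

  Every dc-automorphism of U extends uniquely to the completion, so \<open>s\<close> extends as well.
  Continuity and openness there follow by approximating finitely many points of the completion
  by points of U so closely that all their mutual distances are preserved.
\<close>

lemma autQD: assumes "D \<in> autQ"
  shows "bij_betw D Qnn Qnn" "\<And>p q. p \<in> Qnn \<Longrightarrow> q \<in> Qnn \<Longrightarrow> p \<le> q \<longleftrightarrow> D p \<le> D q"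
    "\<And>q. q < 0 \<Longrightarrow> D q = q"
  using assms unfolding autQ_def by auto

lemma autQ_nonneg: assumes "D \<in> autQ" "0 \<le> q" shows "0 \<le> D q"
proof -
  have "q \<in> Qnn" using assms(2) by (simp add: Qnn_def)
  then have "D q \<in> D ` Qnn" by blast
  also have "D ` Qnn = Qnn" using autQD(1)[OF assms(1)] by (simp add: bij_betw_def)
  finally show ?thesis by (simp add: Qnn_def)
qed

lemma autQ_le_iff: assumes "D \<in> autQ" shows "D p \<le> D q \<longleftrightarrow> p \<le> q"
proof (cases "0 \<le> p")
  case True
  then show ?thesis
  proof (cases "0 \<le> q")
    case True
    then show ?thesis using autQD(2)[OF assms, of p q] \<open>0 \<le> p\<close> by (auto simp: Qnn_def)
  next
    case False
    then have "D q = q" using autQD(3)[OF assms] by auto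
    moreover have "0 \<le> D p" using autQ_nonneg[OF assms True] .
    ultimately show ?thesis using False True by auto
  qed
next
  case False
  then have Dp: "D p = p" using autQD(3)[OF assms] by auto
  show ?thesis
  proof (cases "0 \<le> q")
    case True
    then show ?thesis using Dp False autQ_nonneg[OF assms True] by auto
  next
    case False
    then show ?thesis using Dp autQD(3)[OF assms] by auto
  qed
qed

lemma autQ_less_iff: "D \<in> autQ \<Longrightarrow> D p < D q \<longleftrightarrow> p < q"
  using autQ_le_iff[of D q p] by (meson not_le)

lemma autQ_inj: assumes "D \<in> autQ" shows "inj D"
proof (rule injI)
  fix x y assume "D x = D y"
  then show "x = y" using autQ_le_iff[OF assms, of x y] autQ_le_iff[OF assms, of y x] by auto
qed

lemma autQ_eq_iff: assumes "D \<in> autQ" shows "D p = D q \<longleftrightarrow> p = q"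
  by (rule inj_eq[OF autQ_inj[OF assms]])

lemma autQ_zero: assumes "D \<in> autQ" shows "D 0 = 0"
proof -
  have "0 \<in> Qnn" by (simp add: Qnn_def)
  then obtain p where p: "p \<in> Qnn" "D p = 0"
    using autQD(1)[OF assms] unfolding bij_betw_def by (metis imageE)
  have "D 0 \<le> D p" using p(1) autQ_le_iff[OF assms, of 0 p] by (simp add: Qnn_def)
  then have "D 0 \<le> 0" using p by simp
  then show ?thesis using autQ_nonneg[OF assms, of 0] by simp
qed

lemma autQ_surj: assumes "D \<in> autQ" shows "surj D"
proof -
  have "q \<in> range D" for q
  proof (cases "0 \<le> q")
    case True
    then have "q \<in> Qnn" by (simp add: Qnn_def)
    then show ?thesis using autQD(1)[OF assms] unfolding bij_betw_def by auto
  next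
    case False
    then have "q = D q" using autQD(3)[OF assms, of q] by simp
    then show ?thesis by (rule range_eqI)
  qed
  then show ?thesis by auto
qed

lemma autQ_bij: "D \<in> autQ \<Longrightarrow> bij D"
  by (simp add: bij_def autQ_inj autQ_surj)

lemma autQ_pos_iff: "D \<in> autQ \<Longrightarrow> 0 < D q \<longleftrightarrow> 0 < q"
  using autQ_less_iff[of D 0 q] autQ_zero[of D] by simp

lemma autQI:
  assumes "bij D" "\<And>p q. D p \<le> D q \<longleftrightarrow> p \<le> q" "\<And>q. q < 0 \<Longrightarrow> D q = q"
  shows "D \<in> autQ"
proof -
  have nn: "0 \<le> D q \<longleftrightarrow> 0 \<le> q" for q
  proof
    assume "0 \<le> D q"
    show "0 \<le> q"
    proof (rule ccontr)
      assume "\<not> 0 \<le> q" then have "D q = q" using assms(3) by auto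
      then show False using \<open>0 \<le> D q\<close> \<open>\<not> 0 \<le> q\<close> by auto
    qed
  next
    assume "0 \<le> q"
    show "0 \<le> D q"
    proof (rule ccontr)
      assume "\<not> 0 \<le> D q"
      obtain p where p: "D p = D q" "p = D q" using assms(3)[of "D q"] \<open>\<not> 0 \<le> D q\<close> by auto
      then have "p = q" using assms(2)[of p q] assms(2)[of q p] by auto
      then show False using p \<open>0 \<le> q\<close> \<open>\<not> 0 \<le> D q\<close> by auto
    qed
  qed
  have "D ` Qnn = Qnn"
  proof
    show "D ` Qnn \<subseteq> Qnn" using nn by (auto simp: Qnn_def)
    show "Qnn \<subseteq> D ` Qnn"
    proof
      fix q assume "q \<in> Qnn"
      obtain p where "D p = q" using assms(1) by (metis bij_pointE)
      then show "q \<in> D ` Qnn" using nn \<open>q \<in> Qnn\<close> by (auto simp: Qnn_def)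
    qed
  qed
  moreover have "inj_on D Qnn" using assms(1) bij_is_inj inj_on_subset by blast
  ultimately have "bij_betw D Qnn Qnn" by (simp add: bij_betw_def)
  then show ?thesis using assms unfolding autQ_def by auto
qed

lemma autQ_inv: assumes "D \<in> autQ" shows "inv D \<in> autQ"
proof (rule autQI)
  show "bij (inv D)" using autQ_bij[OF assms] bij_imp_bij_inv by blast
  have fi: "D (inv D x) = x" for x using autQ_surj[OF assms] by (simp add: surj_f_inv_f)
  show "inv D p \<le> inv D q \<longleftrightarrow> p \<le> q" for p q
    using autQ_le_iff[OF assms, of "inv D p" "inv D q"] fi by simp
  show "q < 0 \<Longrightarrow> inv D q = q" for q
    using autQD(3)[OF assms, of q] autQ_inj[OF assms] by (metis inv_f_f)
qed

lemma autQ_f_inv: "D \<in> autQ \<Longrightarrow> D (inv D x) = x"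
  using autQ_surj by (simp add: surj_f_inv_f)

lemma autQ_inv_f: "D \<in> autQ \<Longrightarrow> inv D (D x) = x"
  using autQ_inj by (simp add: inv_f_f)

lemma autQ_comp: assumes "D \<in> autQ" "D' \<in> autQ" shows "D \<circ> D' \<in> autQ"
proof (rule autQI)
  show "bij (D \<circ> D')" using autQ_bij assms bij_comp by blast
  show "(D \<circ> D') p \<le> (D \<circ> D') q \<longleftrightarrow> p \<le> q" for p q using autQ_le_iff assms by simp
  show "q < 0 \<Longrightarrow> (D \<circ> D') q = q" for q using autQD(3)[OF assms(2), of q] autQD(3)[OF assms(1), of q] by simp
qed

lemma autQ_id: "id \<in> autQ"
  by (rule autQI) auto

lemma autQ_comp_inv: "D \<in> autQ \<Longrightarrow> D \<circ> inv D = id"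
  using autQ_f_inv by fastforce

lemma autQ_inv_comp: "D \<in> autQ \<Longrightarrow> inv D \<circ> D = id"
  using autQ_inv_f by fastforce

lemma autQ_less_inv: assumes "D \<in> autQ" "t < inv D r" shows "D t < r"
  using autQ_less_iff[OF assms(1), of t "inv D r"] assms autQ_f_inv[OF assms(1), of r] by simp

lemma autQ_inv_pos: "D \<in> autQ \<Longrightarrow> 0 < r \<Longrightarrow> 0 < inv D r"
  using autQ_pos_iff autQ_inv by blast

lemma autQ_max: "D \<in> autQ \<Longrightarrow> D (max a b) = max (D a) (D b)"
  using autQ_le_iff by (simp add: max_def)

section \<open>Back and forth between ultrametric spaces with the extension property\<close>

lemma ultrametricD:
  assumes "ultrametric d"
  shows "0 \<le> d x y" "d x y = 0 \<longleftrightarrow> x = y" "d x y = d y x" "d x z \<le> max (d x y) (d y z)"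
    "d x x = 0"
  using assms unfolding ultrametric_def by auto

lemma ultrametric_isosceles:
  assumes "ultrametric d" "d a b < d b c" shows "d a c = d b c"
proof -
  have 1: "d a c \<le> max (d a b) (d b c)" using ultrametricD(4)[OF assms(1)] .
  have 2: "d b c \<le> max (d b a) (d a c)" using ultrametricD(4)[OF assms(1)] .
  have 3: "d b a = d a b" using ultrametricD(3)[OF assms(1)] .
  have "max (d a b) (d b c) = d b c" using assms(2) by simp
  then have 4: "d a c \<le> d b c" using 1 by simp
  have "d b c \<le> d a c"
  proof (rule ccontr)
    assume "\<not> d b c \<le> d a c"
    then have "max (d b a) (d a c) < d b c" using 3 assms(2) by simp
    then show False using 2 by linarith
  qed
  then show ?thesis using 4 by simp
qed

lemma ultrametric_less_trans:
  assumes "ultrametric d" "d x y < r" "d y z < r" shows "d x z < r"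
proof -
  have "d x z \<le> max (d x y) (d y z)" using ultrametricD(4)[OF assms(1)] .
  moreover have "max (d x y) (d y z) < r" using assms(2,3) by simp
  ultimately show ?thesis by linarith
qed

lemma ultrametric_less_trans3:
  assumes "ultrametric d" "d x y < r" "d y z < r" "d z w < r" shows "d x w < r"
  using ultrametric_less_trans[OF assms(1) ultrametric_less_trans[OF assms(1,2,3)] assms(4)] .

lemma ultrametric_dist_stable:
  assumes "ultrametric d" "d a a' < t" "d b b' < t" "t \<le> d a b" shows "d a' b' = d a b"
proof -
  have s1: "d a' a = d a a'" using ultrametricD(3)[OF assms(1)] .
  have 1: "d a' b = d a b"
    using ultrametric_isosceles[OF assms(1), of a' a b] assms s1 by simp
  have s2: "d b' b = d b b'" using ultrametricD(3)[OF assms(1)] .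
  have s3: "d b a' = d a' b" using ultrametricD(3)[OF assms(1)] .
  have s4: "d b' a' = d a' b'" using ultrametricD(3)[OF assms(1)] .
  have "d b' b < d b a'" using 1 assms s2 s3 by simp
  then have "d b' a' = d b a'" using ultrametric_isosceles[OF assms(1), of b' b a'] by simp
  then show ?thesis using 1 s3 s4 by simp
qed

definition ultrametric_on :: "'c set \<Rightarrow> ('c \<Rightarrow> 'c \<Rightarrow> rat) \<Rightarrow> bool" where
  "ultrametric_on X d \<longleftrightarrow> (\<forall>x\<in>X. \<forall>y\<in>X. 0 \<le> d x y \<and> (d x y = 0 \<longleftrightarrow> x = y) \<and> d x y = d y x
      \<and> (\<forall>z\<in>X. d x z \<le> max (d x y) (d y z)))"

definition extension_property_on :: "'c set \<Rightarrow> ('c \<Rightarrow> 'c \<Rightarrow> rat) \<Rightarrow> bool" where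
  "extension_property_on X d \<longleftrightarrow> (\<forall>A r. finite A \<and> A \<subseteq> X \<and> (\<forall>a\<in>A. 0 < r a)
        \<and> (\<forall>a\<in>A. \<forall>b\<in>A. d a b \<le> max (r a) (r b) \<and> r a \<le> max (d a b) (r b))
        \<longrightarrow> (\<exists>z\<in>X. \<forall>a\<in>A. d z a = r a))"

lemma ultrametric_imp_ultrametric_on: assumes "ultrametric d" shows "ultrametric_on UNIV d"
  unfolding ultrametric_on_def
  by (intro ballI conjI; (rule ultrametricD[OF assms])?)

lemma ultrametric_onD:
  assumes "ultrametric_on X d" "x \<in> X" "y \<in> X"
  shows "0 \<le> d x y" "d x y = 0 \<longleftrightarrow> x = y" "d x y = d y x" "d x x = 0"
    "z \<in> X \<Longrightarrow> d x z \<le> max (d x y) (d y z)"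
  using assms unfolding ultrametric_on_def by auto

lemma extension_property_on_nonempty: assumes "extension_property_on X d" shows "X \<noteq> {}"
proof -
  have "\<exists>z\<in>X. \<forall>a\<in>{}. d z a = (\<lambda>_. 1) a"
    using assms[unfolded extension_property_on_def, rule_format, of "{}" "\<lambda>_. 1"] by simp
  then show ?thesis by blast
qed

text \<open>Finite partial isometries are kept as relations, so that going back is going forth for
  the converse relation.\<close>

definition fin_partial_iso :: "'c set \<Rightarrow> 'e set \<Rightarrow> ('c \<Rightarrow> 'c \<Rightarrow> rat) \<Rightarrow> ('e \<Rightarrow> 'e \<Rightarrow> rat) \<Rightarrow> ('c \<times> 'e) set \<Rightarrow> bool"
  where "fin_partial_iso X Y d1 d2 R \<longleftrightarrow> finite R \<and> R \<subseteq> X \<times> Y \<and>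
           (\<forall>a b a' b'. (a, b) \<in> R \<longrightarrow> (a', b') \<in> R \<longrightarrow> d2 b b' = d1 a a')"

lemma fin_partial_isoD: assumes "fin_partial_iso X Y d1 d2 R" "(a, b) \<in> R" "(a', b') \<in> R"
  shows "d2 b b' = d1 a a'"
  using assms unfolding fin_partial_iso_def by blast

lemma fin_partial_iso_converse: assumes "fin_partial_iso X Y d1 d2 R" shows "fin_partial_iso Y X d2 d1 (R\<inverse>)"
proof -
  have "finite (R\<inverse>)" using assms unfolding fin_partial_iso_def by simp
  moreover have "R\<inverse> \<subseteq> Y \<times> X" using assms unfolding fin_partial_iso_def by auto
  moreover have "d1 b b' = d2 a a'" if "(a, b) \<in> R\<inverse>" "(a', b') \<in> R\<inverse>" for a b a' b'
    using fin_partial_isoD[OF assms, of b a b' a'] that by simp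
  ultimately show ?thesis unfolding fin_partial_iso_def by blast
qed

lemma fin_partial_iso_left_unique:
  assumes "ultrametric_on X d1" "fin_partial_iso X Y d1 d2 R" "(a, b) \<in> R" "(a', b) \<in> R" "ultrametric_on Y d2"
  shows "a = a'"
proof -
  have ab: "a \<in> X" "a' \<in> X" "b \<in> Y" using assms(2-4) unfolding fin_partial_iso_def by auto
  have "d1 a a' = d2 b b" using fin_partial_isoD[OF assms(2,3,4)] by simp
  also have "\<dots> = 0" using ultrametric_onD(4)[OF assms(5) ab(3) ab(3)] .
  finally show ?thesis using ultrametric_onD(2)[OF assms(1) ab(1,2)] by simp
qed

lemma fin_partial_iso_insert:
  assumes u1: "ultrametric_on X d1" and u2: "ultrametric_on Y d2"
    and P: "fin_partial_iso X Y d1 d2 R" and x: "x \<in> X" and z: "z \<in> Y"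
    and zR: "\<And>a b. (a, b) \<in> R \<Longrightarrow> d2 z b = d1 x a"
  shows "fin_partial_iso X Y d1 d2 (insert (x, z) R)"
proof -
  have RXY: "R \<subseteq> X \<times> Y" using P unfolding fin_partial_iso_def by simp
  have zz: "d2 z z = d1 x x" using ultrametric_onD(4)[OF u2 z z] ultrametric_onD(4)[OF u1 x x] by simp
  have Rz: "d2 b z = d1 a x" if "(a, b) \<in> R" for a b
  proof -
    have "a \<in> X" "b \<in> Y" using that RXY by auto
    then show ?thesis using zR[OF that] ultrametric_onD(3)[OF u1 x] ultrametric_onD(3)[OF u2 z] by simp
  qed
  have "d2 b b' = d1 a a'" if ab: "(a, b) \<in> insert (x, z) R" "(a', b') \<in> insert (x, z) R" for a b a' b'
    using ab zz zR Rz fin_partial_isoD[OF P] by auto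
  then show ?thesis using P x z unfolding fin_partial_iso_def by auto
qed

lemma fin_partial_iso_extend_dom:
  assumes u1: "ultrametric_on X d1" and u2: "ultrametric_on Y d2" and ur: "extension_property_on Y d2"
    and P: "fin_partial_iso X Y d1 d2 R" and x: "x \<in> X"
  shows "\<exists>R'. fin_partial_iso X Y d1 d2 R' \<and> R \<subseteq> R' \<and> x \<in> fst ` R'"
proof (cases "x \<in> fst ` R")
  case True then show ?thesis using P by blast
next
  case False
  define A where "A = snd ` R"
  define r where "r b = d1 x (SOME a. (a, b) \<in> R)" for b
  have RXY: "R \<subseteq> X \<times> Y" using P unfolding fin_partial_iso_def by simp
  have rv: "r b = d1 x a" if "(a, b) \<in> R" for a b
  proof -
    have "(SOME a. (a, b) \<in> R, b) \<in> R" using that by (rule someI)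
    then have "(SOME a. (a, b) \<in> R) = a" using fin_partial_iso_left_unique[OF u1 P _ that u2] by blast
    then show ?thesis unfolding r_def by simp
  qed
  have "finite A" using P unfolding fin_partial_iso_def A_def by simp
  moreover have "A \<subseteq> Y" using RXY unfolding A_def by auto
  moreover have "\<forall>b\<in>A. 0 < r b"
  proof
    fix b assume "b \<in> A"
    then obtain a where ab: "(a, b) \<in> R" unfolding A_def by auto
    then have "a \<in> X" "x \<noteq> a" using RXY False by force+
    then show "0 < r b"
      using rv[OF ab] ultrametric_onD(1,2)[OF u1 x \<open>a \<in> X\<close>] by (simp add: order_less_le)
  qed
  moreover have "\<forall>b\<in>A. \<forall>b'\<in>A. d2 b b' \<le> max (r b) (r b') \<and> r b \<le> max (d2 b b') (r b')"
  proof (intro ballI)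
    fix b b' assume "b \<in> A" "b' \<in> A"
    then obtain a a' where ab: "(a, b) \<in> R" "(a', b') \<in> R" unfolding A_def by auto
    then have aX: "a \<in> X" "a' \<in> X" using RXY by auto
    have t1: "d1 a a' \<le> max (d1 a x) (d1 x a')" using ultrametric_onD(5)[OF u1 aX(1) x aX(2)] .
    have t2: "d1 x a \<le> max (d1 x a') (d1 a' a)" using ultrametric_onD(5)[OF u1 x aX(2) aX(1)] .
    show "d2 b b' \<le> max (r b) (r b') \<and> r b \<le> max (d2 b b') (r b')"
      using t1 t2 fin_partial_isoD[OF P ab] ultrametric_onD(3)[OF u1 aX(1)] ultrametric_onD(3)[OF u1 aX(1) aX(2)]
        rv[OF ab(1)] rv[OF ab(2)] x by (simp add: max.commute)
  qed
  ultimately obtain z where z: "z \<in> Y" "\<forall>b\<in>A. d2 z b = r b"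
    using ur[unfolded extension_property_on_def, rule_format, of A r] by blast
  have "d2 z b = d1 x a" if "(a, b) \<in> R" for a b
    using z(2) rv[OF that] that unfolding A_def by force
  then have "fin_partial_iso X Y d1 d2 (insert (x, z) R)"
    by (rule fin_partial_iso_insert[OF u1 u2 P x z(1)])
  moreover have "R \<subseteq> insert (x, z) R" "x \<in> fst ` insert (x, z) R" by auto
  ultimately show ?thesis by blast
qed

lemma fin_partial_iso_extend_ran:
  assumes u1: "ultrametric_on X d1" and u2: "ultrametric_on Y d2" and ur: "extension_property_on X d1"
    and P: "fin_partial_iso X Y d1 d2 R" and y: "y \<in> Y"
  shows "\<exists>R'. fin_partial_iso X Y d1 d2 R' \<and> R \<subseteq> R' \<and> y \<in> snd ` R'"
proof -
  obtain R'' where R'': "fin_partial_iso Y X d2 d1 R''" "R\<inverse> \<subseteq> R''" "y \<in> fst ` R''"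
    using fin_partial_iso_extend_dom[OF u2 u1 ur fin_partial_iso_converse[OF P] y] by blast
  have "fin_partial_iso X Y d1 d2 (R''\<inverse>)" using fin_partial_iso_converse[OF R''(1)] by simp
  moreover have "R \<subseteq> R''\<inverse>" using R''(2) by auto
  moreover have "y \<in> snd ` (R''\<inverse>)" using R''(3) by force
  ultimately show ?thesis by blast
qed

lemma fin_partial_iso_extend:
  assumes u1: "ultrametric_on X d1" and u2: "ultrametric_on Y d2"
    and ur1: "extension_property_on X d1" and ur2: "extension_property_on Y d2"
    and P: "fin_partial_iso X Y d1 d2 R" and x: "x \<in> X" and y: "y \<in> Y"
  shows "\<exists>R'. fin_partial_iso X Y d1 d2 R' \<and> R \<subseteq> R' \<and> x \<in> fst ` R' \<and> y \<in> snd ` R'"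
proof -
  obtain R1 where R1: "fin_partial_iso X Y d1 d2 R1" "R \<subseteq> R1" "x \<in> fst ` R1"
    using fin_partial_iso_extend_dom[OF u1 u2 ur2 P x] by blast
  obtain R2 where R2: "fin_partial_iso X Y d1 d2 R2" "R1 \<subseteq> R2" "y \<in> snd ` R2"
    using fin_partial_iso_extend_ran[OF u1 u2 ur1 R1(1) y] by blast
  have "R \<subseteq> R2" using R1(2) R2(2) by (rule subset_trans)
  moreover have "x \<in> fst ` R2" using R1(3) image_mono[OF R2(2)] by (rule subsetD[rotated])
  ultimately show ?thesis using R2(1,3) by blast
qed

lemma fin_partial_iso_chain:
  assumes cX: "countable X" and cY: "countable Y"
    and u1: "ultrametric_on X d1" and u2: "ultrametric_on Y d2"
    and ur1: "extension_property_on X d1" and ur2: "extension_property_on Y d2"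
    and P0: "fin_partial_iso X Y d1 d2 R0"
  obtains C where "C 0 = R0" "\<And>n. fin_partial_iso X Y d1 d2 (C n)" "incseq C"
    "X \<subseteq> fst ` (\<Union>n. C n)" "Y \<subseteq> snd ` (\<Union>n. C n)"
proof -
  have ne: "X \<noteq> {}" "Y \<noteq> {}"
    by (rule extension_property_on_nonempty[OF ur1], rule extension_property_on_nonempty[OF ur2])
  define ex ey where "ex = from_nat_into X" and "ey = from_nat_into Y"
  have exy: "ex n \<in> X" "ey n \<in> Y" for n
    unfolding ex_def ey_def by (rule from_nat_into[OF ne(1)], rule from_nat_into[OF ne(2)])
  have rXY: "range ex = X" "range ey = Y"
    unfolding ex_def ey_def by (rule range_from_nat_into[OF ne(1) cX], rule range_from_nat_into[OF ne(2) cY])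
  define step where "step R n = (SOME R'. fin_partial_iso X Y d1 d2 R' \<and> R \<subseteq> R'
                                   \<and> ex n \<in> fst ` R' \<and> ey n \<in> snd ` R')" for R n
  have step: "fin_partial_iso X Y d1 d2 (step R n) \<and> R \<subseteq> step R n
                \<and> ex n \<in> fst ` step R n \<and> ey n \<in> snd ` step R n"
    if "fin_partial_iso X Y d1 d2 R" for R n
    unfolding step_def by (rule someI_ex[OF fin_partial_iso_extend[OF u1 u2 ur1 ur2 that exy]])
  define C where "C = rec_nat R0 (\<lambda>n R. step R n)"
  have C0: "C 0 = R0" and CS: "C (Suc n) = step (C n) n" for n
    unfolding C_def by simp_all
  have CP: "fin_partial_iso X Y d1 d2 (C n)" for n
  proof (induction n)
    case 0 then show ?case using P0 C0 by simp
  next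
    case (Suc n) then show ?case using step CS by simp
  qed
  have Cstep: "C n \<subseteq> C (Suc n)" "ex n \<in> fst ` C (Suc n)" "ey n \<in> snd ` C (Suc n)" for n
    using step[OF CP, of n n] CS by simp_all
  have mono: "incseq C" using Cstep(1) by (simp add: incseq_SucI)
  have dom: "X \<subseteq> fst ` (\<Union>n. C n)"
  proof
    fix x assume "x \<in> X"
    then obtain n where "x = ex n" using rXY(1) by blast
    then show "x \<in> fst ` (\<Union>n. C n)" using Cstep(2)[of n] by blast
  qed
  have ran: "Y \<subseteq> snd ` (\<Union>n. C n)"
  proof
    fix y assume "y \<in> Y"
    then obtain n where "y = ey n" using rXY(2) by blast
    then show "y \<in> snd ` (\<Union>n. C n)" using Cstep(3)[of n] by blast
  qed
  show thesis by (rule that[OF C0 CP mono dom ran])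
qed

lemma isometric_bij_from_rel:
  assumes u1: "ultrametric_on X d1" and u2: "ultrametric_on Y d2"
    and RXY: "R \<subseteq> X \<times> Y"
    and Riso: "\<And>a b a' b'. (a, b) \<in> R \<Longrightarrow> (a', b') \<in> R \<Longrightarrow> d2 b b' = d1 a a'"
    and dom: "X \<subseteq> fst ` R" and ran: "Y \<subseteq> snd ` R"
  shows "\<exists>f. bij_betw f X Y \<and> (\<forall>x\<in>X. \<forall>y\<in>X. d2 (f x) (f y) = d1 x y)
           \<and> (\<forall>a b. (a, b) \<in> R \<longrightarrow> f a = b)"
proof -
  have Rfun: "y = y'" if "(x, y) \<in> R" "(x, y') \<in> R" for x y y'
  proof -
    have xy: "x \<in> X" "y \<in> Y" "y' \<in> Y" using that RXY by auto
    have "d2 y y' = 0" using Riso[OF that] ultrametric_onD(4)[OF u1 xy(1) xy(1)] by simp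
    then show ?thesis using ultrametric_onD(2)[OF u2 xy(2,3)] by simp
  qed
  define f where "f x = (SOME y. (x, y) \<in> R)" for x
  have fR: "(x, f x) \<in> R" if x: "x \<in> X" for x
  proof -
    obtain y where "(x, y) \<in> R" using dom x by force
    then show ?thesis unfolding f_def by (rule someI)
  qed
  have fiso: "\<forall>x\<in>X. \<forall>y\<in>X. d2 (f x) (f y) = d1 x y" using Riso fR by blast
  have "inj_on f X"
  proof (rule inj_onI)
    fix x x' assume xx: "x \<in> X" "x' \<in> X" "f x = f x'"
    have fx: "f x \<in> Y" using fR[OF xx(1)] RXY by auto
    have "d1 x x' = d2 (f x) (f x')" using fiso xx(1,2) by simp
    also have "\<dots> = 0" using xx(3) ultrametric_onD(4)[OF u2 fx fx] by simp
    finally show "x = x'" using ultrametric_onD(2)[OF u1 xx(1,2)] by simp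
  qed
  moreover have "f ` X = Y"
  proof
    show "f ` X \<subseteq> Y" using fR RXY by blast
    show "Y \<subseteq> f ` X"
    proof
      fix y assume "y \<in> Y"
      then obtain x where xy: "(x, y) \<in> R" using ran by force
      then have "x \<in> X" "f x = y" using RXY Rfun[OF fR xy] by auto
      then show "y \<in> f ` X" by blast
    qed
  qed
  moreover have "f a = b" if ab: "(a, b) \<in> R" for a b
  proof -
    have "a \<in> X" using ab RXY by auto
    then show "f a = b" using Rfun[OF fR ab] by simp
  qed
  ultimately show ?thesis using fiso unfolding bij_betw_def by blast
qed

lemma back_and_forth:
  assumes cX: "countable X" and cY: "countable Y"
    and u1: "ultrametric_on X d1" and u2: "ultrametric_on Y d2"
    and ur1: "extension_property_on X d1" and ur2: "extension_property_on Y d2"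
    and F: "finite F" "F \<subseteq> X" "p ` F \<subseteq> Y"
    and iso: "\<forall>a\<in>F. \<forall>b\<in>F. d2 (p a) (p b) = d1 a b"
  shows "\<exists>f. bij_betw f X Y \<and> (\<forall>x\<in>X. \<forall>y\<in>X. d2 (f x) (f y) = d1 x y) \<and> (\<forall>a\<in>F. f a = p a)"
proof -
  define R0 where "R0 = (\<lambda>a. (a, p a)) ` F"
  have P0: "fin_partial_iso X Y d1 d2 R0"
  proof -
    have "finite R0" "R0 \<subseteq> X \<times> Y" using F unfolding R0_def by auto
    moreover have "d2 b b' = d1 a a'" if "(a, b) \<in> R0" "(a', b') \<in> R0" for a b a' b'
      using that iso unfolding R0_def by auto
    ultimately show ?thesis unfolding fin_partial_iso_def by blast
  qed
  obtain C where C: "C 0 = R0" "\<And>n. fin_partial_iso X Y d1 d2 (C n)" "incseq C"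
    "X \<subseteq> fst ` (\<Union>n. C n)" "Y \<subseteq> snd ` (\<Union>n. C n)"
    by (rule fin_partial_iso_chain[OF cX cY u1 u2 ur1 ur2 P0]) blast
  have "C n \<subseteq> X \<times> Y" for n using C(2)[of n] unfolding fin_partial_iso_def by simp
  then have RXY: "(\<Union>n. C n) \<subseteq> X \<times> Y" by blast
  have Riso: "d2 b b' = d1 a a'" if ab: "(a, b) \<in> (\<Union>n. C n)" "(a', b') \<in> (\<Union>n. C n)" for a b a' b'
  proof -
    obtain m n where "(a, b) \<in> C m" "(a', b') \<in> C n" using ab by blast
    then have "(a, b) \<in> C (max m n)" "(a', b') \<in> C (max m n)"
      using monoD[OF C(3), of m "max m n"] monoD[OF C(3), of n "max m n"] by auto
    then show ?thesis by (rule fin_partial_isoD[OF C(2)])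
  qed
  obtain f where "bij_betw f X Y" "\<forall>x\<in>X. \<forall>y\<in>X. d2 (f x) (f y) = d1 x y"
    and f_rel: "\<forall>a b. (a, b) \<in> (\<Union>n. C n) \<longrightarrow> f a = b"
    using isometric_bij_from_rel[OF u1 u2 RXY Riso C(4,5)] by blast
  moreover have "\<forall>a\<in>F. f a = p a" using f_rel C(1) unfolding R0_def by blast
  ultimately show ?thesis by blast
qed

lemma ultrametric_on_scaled:
  assumes "ultrametric_on X d" "D \<in> autQ" shows "ultrametric_on X (\<lambda>x y. D (d x y))"
  unfolding ultrametric_on_def
proof (intro ballI conjI)
  fix x y assume xy: "x \<in> X" "y \<in> X"
  show "0 \<le> D (d x y)" using autQ_nonneg[OF assms(2) ultrametric_onD(1)[OF assms(1) xy]] .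
  show "D (d x y) = 0 \<longleftrightarrow> x = y"
    using ultrametric_onD(2)[OF assms(1) xy] autQ_eq_iff[OF assms(2), of "d x y" 0] autQ_zero[OF assms(2)] by simp
  show "D (d x y) = D (d y x)" using ultrametric_onD(3)[OF assms(1) xy] by simp
  fix z assume z: "z \<in> X"
  show "D (d x z) \<le> max (D (d x y)) (D (d y z))"
    using ultrametric_onD(5)[OF assms(1) xy z] autQ_le_iff[OF assms(2)] autQ_max[OF assms(2)] by metis
qed

lemma extension_property_on_scaled:
  assumes "extension_property_on X d" "D \<in> autQ" shows "extension_property_on X (\<lambda>x y. D (d x y))"
  unfolding extension_property_on_def
proof (intro allI impI)
  fix A r assume H: "finite A \<and> A \<subseteq> X \<and> (\<forall>a\<in>A. 0 < r a)
        \<and> (\<forall>a\<in>A. \<forall>b\<in>A. D (d a b) \<le> max (r a) (r b) \<and> r a \<le> max (D (d a b)) (r b))"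
  have iD: "inv D \<in> autQ" using autQ_inv[OF assms(2)] .
  define r' where "r' a = inv D (r a)" for a
  have "\<forall>a\<in>A. 0 < r' a" using H autQ_inv_pos[OF assms(2)] unfolding r'_def by simp
  moreover have "\<forall>a\<in>A. \<forall>b\<in>A. d a b \<le> max (r' a) (r' b) \<and> r' a \<le> max (d a b) (r' b)"
  proof (intro ballI)
    fix a b assume ab: "a \<in> A" "b \<in> A"
    have 1: "D (d a b) \<le> max (r a) (r b)" "r a \<le> max (D (d a b)) (r b)" using H ab by auto
    have "inv D (D (d a b)) \<le> inv D (max (r a) (r b))" using 1(1) autQ_le_iff[OF iD] by simp
    then have 2: "d a b \<le> max (r' a) (r' b)" unfolding r'_def using autQ_max[OF iD] autQ_inv_f[OF assms(2)] by simp
    have "inv D (r a) \<le> inv D (max (D (d a b)) (r b))" using 1(2) autQ_le_iff[OF iD] by simp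
    then have 3: "r' a \<le> max (d a b) (r' b)" unfolding r'_def using autQ_max[OF iD] autQ_inv_f[OF assms(2)] by simp
    show "d a b \<le> max (r' a) (r' b) \<and> r' a \<le> max (d a b) (r' b)" using 2 3 by simp
  qed
  ultimately have "\<exists>z\<in>X. \<forall>a\<in>A. d z a = r' a"
    using assms(1)[unfolded extension_property_on_def, rule_format, of A r'] H by simp
  then obtain z where z: "z \<in> X" "\<forall>a\<in>A. d z a = r' a" by blast
  have "\<forall>a\<in>A. D (d z a) = r a" using z(2) autQ_f_inv[OF assms(2)] unfolding r'_def by simp
  then show "\<exists>z\<in>X. \<forall>a\<in>A. D (d z a) = r a" using z(1) by blast
qed

lemma back_and_forth_scaled:
  assumes cX: "countable X" and cY: "countable Y"
    and u1: "ultrametric_on X d1" and u2: "ultrametric_on Y d2"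
    and ur1: "extension_property_on X d1" and ur2: "extension_property_on Y d2" and D: "D \<in> autQ"
    and F: "finite F" "F \<subseteq> X" "p ` F \<subseteq> Y"
    and iso: "\<forall>a\<in>F. \<forall>b\<in>F. d2 (p a) (p b) = D (d1 a b)"
  shows "\<exists>f. bij_betw f X Y \<and> (\<forall>x\<in>X. \<forall>y\<in>X. d2 (f x) (f y) = D (d1 x y)) \<and> (\<forall>a\<in>F. f a = p a)"
  using back_and_forth[OF cX cY ultrametric_on_scaled[OF u1 D] u2 extension_property_on_scaled[OF ur1 D] ur2 F iso] .

section \<open>A model of the rational Urysohn ultrametric space\<close>

definition model :: "(rat \<Rightarrow> nat) set" where
  "model = {x. finite {q. x q \<noteq> 0} \<and> (\<forall>q\<le>0. x q = 0)}"

definition model_dist :: "(rat \<Rightarrow> nat) \<Rightarrow> (rat \<Rightarrow> nat) \<Rightarrow> rat" where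
  "model_dist x y = (if x = y then 0 else Max {q. x q \<noteq> y q})"

lemma modelD: "x \<in> model \<Longrightarrow> finite {q. x q \<noteq> 0}" "x \<in> model \<Longrightarrow> q \<le> 0 \<Longrightarrow> x q = 0"
  unfolding model_def by auto

lemma model_diff_finite: assumes "x \<in> model" "y \<in> model" shows "finite {q. x q \<noteq> y q}"
proof -
  have "{q. x q \<noteq> y q} \<subseteq> {q. x q \<noteq> 0} \<union> {q. y q \<noteq> 0}" by auto
  then show ?thesis using modelD(1)[OF assms(1)] modelD(1)[OF assms(2)] finite_subset by blast
qed

lemma model_diff_pos: assumes "x \<in> model" "y \<in> model" "x q \<noteq> y q" shows "0 < q"
proof (rule ccontr)
  assume "\<not> 0 < q" then have "q \<le> 0" by simp
  then show False using modelD(2)[OF assms(1)] modelD(2)[OF assms(2)] assms(3) by simp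
qed

lemma model_dist_ge: assumes "x \<in> model" "y \<in> model" "x q \<noteq> y q" shows "q \<le> model_dist x y"
proof -
  have "x \<noteq> y" using assms(3) by auto
  then have "model_dist x y = Max {q. x q \<noteq> y q}" unfolding model_dist_def by simp
  then show ?thesis using Max_ge[OF model_diff_finite[OF assms(1,2)], of q] assms(3) by simp
qed

lemma model_dist_witness: assumes "x \<in> model" "y \<in> model" "x \<noteq> y"
  shows "x (model_dist x y) \<noteq> y (model_dist x y)" "0 < model_dist x y"
proof -
  have ne: "{q. x q \<noteq> y q} \<noteq> {}" using assms(3) by auto
  have e: "model_dist x y = Max {q. x q \<noteq> y q}" unfolding model_dist_def using assms(3) by simp
  have "Max {q. x q \<noteq> y q} \<in> {q. x q \<noteq> y q}" using Max_in[OF model_diff_finite[OF assms(1,2)] ne] .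
  then show 1: "x (model_dist x y) \<noteq> y (model_dist x y)" using e by simp
  show "0 < model_dist x y" using model_diff_pos[OF assms(1,2) 1] .
qed

lemma model_dist_above: assumes "x \<in> model" "y \<in> model" "model_dist x y < q" shows "x q = y q"
  using model_dist_ge[OF assms(1,2), of q] assms(3) by (meson not_le)

lemma model_dist_eqI: assumes "x \<in> model" "y \<in> model" "x t \<noteq> y t" "\<And>q. t < q \<Longrightarrow> x q = y q"
  shows "model_dist x y = t"
proof -
  have 1: "t \<le> model_dist x y" using model_dist_ge[OF assms(1-3)] .
  have "x \<noteq> y" using assms(3) by auto
  then have "x (model_dist x y) \<noteq> y (model_dist x y)" using model_dist_witness[OF assms(1,2)] by simp
  then have "\<not> t < model_dist x y" using assms(4) by blast
  then show ?thesis using 1 by simp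
qed

lemma model_dist_self [simp]: "model_dist x x = 0" unfolding model_dist_def by simp

lemma model_dist_sym: "model_dist x y = model_dist y x"
proof -
  have "{q. x q \<noteq> y q} = {q. y q \<noteq> x q}" by auto
  then show ?thesis unfolding model_dist_def by auto
qed

lemma model_dist_nonneg: assumes "x \<in> model" "y \<in> model" shows "0 \<le> model_dist x y"
  using model_dist_witness[OF assms] by (cases "x = y") (auto simp: less_imp_le)

lemma model_dist_eq_0_iff: assumes "x \<in> model" "y \<in> model" shows "model_dist x y = 0 \<longleftrightarrow> x = y"
  using model_dist_witness[OF assms] by (cases "x = y") auto

lemma model_dist_ultra:
  assumes "x \<in> model" "y \<in> model" "z \<in> model"
  shows "model_dist x z \<le> max (model_dist x y) (model_dist y z)"
proof (cases "x = z")
  case True then show ?thesis using model_dist_nonneg[OF assms(1,2)] by simp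
next
  case False
  define t where "t = model_dist x z"
  have "x t \<noteq> z t" using model_dist_witness(1)[OF assms(1,3) False] unfolding t_def .
  then have "x t \<noteq> y t \<or> y t \<noteq> z t" by auto
  then show ?thesis
  proof
    assume "x t \<noteq> y t" then have "t \<le> model_dist x y" using model_dist_ge[OF assms(1,2)] by simp
    then show ?thesis unfolding t_def by simp
  next
    assume "y t \<noteq> z t" then have "t \<le> model_dist y z" using model_dist_ge[OF assms(2,3)] by simp
    then show ?thesis unfolding t_def by simp
  qed
qed

lemma ultrametric_on_model: "ultrametric_on model model_dist"
  unfolding ultrametric_on_def
proof (intro ballI conjI)
  fix x y z assume xyz: "x \<in> model" "y \<in> model" "z \<in> model"
  show "model_dist x z \<le> max (model_dist x y) (model_dist y z)" by (rule model_dist_ultra[OF xyz])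
next
  fix x y assume xy: "x \<in> model" "y \<in> model"
  show "0 \<le> model_dist x y" by (rule model_dist_nonneg[OF xy])
  show "model_dist x y = 0 \<longleftrightarrow> x = y" by (rule model_dist_eq_0_iff[OF xy])
  show "model_dist x y = model_dist y x" by (rule model_dist_sym)
qed

definition model_bump :: "(rat \<Rightarrow> nat) \<Rightarrow> rat \<Rightarrow> nat \<Rightarrow> (rat \<Rightarrow> nat)" where
  "model_bump x \<rho> k q = (if \<rho> < q then x q else if q = \<rho> then k else 0)"

lemma model_bump_in_model: assumes "x \<in> model" "0 < \<rho>" shows "model_bump x \<rho> k \<in> model"
proof -
  have "{q. model_bump x \<rho> k q \<noteq> 0} \<subseteq> {q. x q \<noteq> 0} \<union> {\<rho>}" unfolding model_bump_def by auto
  then have "finite {q. model_bump x \<rho> k q \<noteq> 0}" using modelD(1)[OF assms(1)] finite_subset by blast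
  moreover have "model_bump x \<rho> k q = 0" if "q \<le> 0" for q using that assms(2) unfolding model_bump_def by auto
  ultimately show ?thesis unfolding model_def by simp
qed

lemma model_dist_bump:
  assumes "x \<in> model" "y \<in> model" "0 < \<rho>" "y \<rho> \<noteq> k"
  shows "model_dist (model_bump x \<rho> k) y = max \<rho> (model_dist y x)"
proof (cases "\<rho> < model_dist y x")
  case True
  have "y \<noteq> x" using True assms(3) by auto
  then have "model_bump x \<rho> k (model_dist y x) \<noteq> y (model_dist y x)"
    using model_dist_witness(1)[OF assms(2,1)] True unfolding model_bump_def by simp
  moreover have "model_bump x \<rho> k q = y q" if "model_dist y x < q" for q
    using model_dist_above[OF assms(2,1) that] that True unfolding model_bump_def by simp
  ultimately show ?thesis
    using model_dist_eqI[OF model_bump_in_model[OF assms(1,3)] assms(2)] True by simp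
next
  case False
  have "model_bump x \<rho> k \<rho> \<noteq> y \<rho>" using assms(4) unfolding model_bump_def by simp
  moreover have "model_bump x \<rho> k q = y q" if "\<rho> < q" for q
    using model_dist_above[OF assms(2,1)] False that unfolding model_bump_def by simp
  ultimately show ?thesis
    using model_dist_eqI[OF model_bump_in_model[OF assms(1,3)] assms(2)] False by simp
qed

lemma extension_property_on_model: "extension_property_on model model_dist"
  unfolding extension_property_on_def
proof (intro allI impI)
  fix A r assume H: "finite A \<and> A \<subseteq> model \<and> (\<forall>a\<in>A. 0 < r a)
        \<and> (\<forall>a\<in>A. \<forall>b\<in>A. model_dist a b \<le> max (r a) (r b) \<and> r a \<le> max (model_dist a b) (r b))"
  then have fA: "finite A" and AM: "A \<subseteq> model" by auto
  show "\<exists>z\<in>model. \<forall>a\<in>A. model_dist z a = r a"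
  proof (cases "A = {}")
    case True
    have "(\<lambda>_. 0) \<in> model" unfolding model_def by simp
    then show ?thesis using True by blast
  next
    case False
    have "Min (r ` A) \<in> r ` A" using Min_in[OF finite_imageI[OF fA]] False by simp
    then obtain a0 where a0: "a0 \<in> A" "r a0 = Min (r ` A)" by auto
    have a0_min: "r a0 \<le> r a" if "a \<in> A" for a
      using a0(2) Min_le[OF finite_imageI[OF fA], of "r a" r] that by simp
    define \<rho> where "\<rho> = r a0"
    define k where "k = Suc (Max ((\<lambda>a. a \<rho>) ` A))"
    have "\<rho> > 0" "a0 \<in> model" using H a0(1) unfolding \<rho>_def by auto
    have k: "a \<rho> \<noteq> k" if "a \<in> A" for a
      using Max_ge[OF finite_imageI[OF fA], of "a \<rho>"] that unfolding k_def by fastforce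
    have r_eq: "r a = max \<rho> (model_dist a a0)" if "a \<in> A" for a
    proof -
      have "model_dist a a0 \<le> max (r a) \<rho>" "r a \<le> max (model_dist a a0) \<rho>"
        using H a0(1) that unfolding \<rho>_def by auto
      then show ?thesis using a0_min[OF that] unfolding \<rho>_def by (auto simp: max_def split: if_splits)
    qed
    have "model_dist (model_bump a0 \<rho> k) a = r a" if "a \<in> A" for a
      using model_dist_bump[of a0 a \<rho> k] \<open>a0 \<in> model\<close> \<open>\<rho> > 0\<close> k[OF that] AM that r_eq[OF that] by auto
    then show ?thesis using model_bump_in_model[OF \<open>a0 \<in> model\<close> \<open>\<rho> > 0\<close>] by blast
  qed
qed

lemma countable_model: "countable model"
proof -
  define g where "g x = {(q, x q) | q. x q \<noteq> 0}" for x :: "rat \<Rightarrow> nat"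
  have "inj_on g model"
  proof (rule inj_onI)
    fix x y assume "x \<in> model" "y \<in> model" "g x = g y"
    show "x = y"
    proof
      fix q
      show "x q = y q"
      proof (cases "x q = 0")
        case True
        show ?thesis
        proof (rule ccontr)
          assume "x q \<noteq> y q"
          then have "(q, y q) \<in> g y" using True unfolding g_def by auto
          then have "(q, y q) \<in> g x" using \<open>g x = g y\<close> by simp
          then show False using \<open>x q \<noteq> y q\<close> unfolding g_def by auto
        qed
      next
        case False
        then have "(q, x q) \<in> g x" unfolding g_def by auto
        then have "(q, x q) \<in> g y" using \<open>g x = g y\<close> by simp
        then show ?thesis unfolding g_def by auto
      qed
    qed
  qed
  moreover have "g ` model \<subseteq> Collect finite"
  proof
    fix S assume "S \<in> g ` model"
    then obtain x where x: "x \<in> model" "S = g x" by blast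
    have "g x = (\<lambda>q. (q, x q)) ` {q. x q \<noteq> 0}" unfolding g_def by auto
    then show "S \<in> Collect finite" using modelD(1)[OF x(1)] x(2) by simp
  qed
  then have "countable (g ` model)" using countable_Collect_finite countable_subset by blast
  ultimately show ?thesis using countable_image_inj_on by blast
qed

definition model_act :: "(rat \<Rightarrow> rat) \<Rightarrow> (rat \<Rightarrow> nat) \<Rightarrow> (rat \<Rightarrow> nat)" where
  "model_act h x = x \<circ> inv h"

lemma model_act_in_model: assumes "h \<in> autQ" "x \<in> model" shows "model_act h x \<in> model"
proof -
  have "{q. model_act h x q \<noteq> 0} \<subseteq> h ` {q. x q \<noteq> 0}"
  proof
    fix q assume "q \<in> {q. model_act h x q \<noteq> 0}"
    then have "x (inv h q) \<noteq> 0" unfolding model_act_def by simp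
    moreover have "q = h (inv h q)" using autQ_f_inv[OF assms(1)] by simp
    ultimately show "q \<in> h ` {q. x q \<noteq> 0}" by blast
  qed
  then have "finite {q. model_act h x q \<noteq> 0}" using modelD(1)[OF assms(2)] finite_subset by blast
  moreover have "model_act h x q = 0" if "q \<le> 0" for q
  proof -
    have "inv h q \<le> 0" using autQ_le_iff[OF autQ_inv[OF assms(1)], of q 0] that
        autQ_zero[OF autQ_inv[OF assms(1)]] by simp
    then show ?thesis unfolding model_act_def using modelD(2)[OF assms(2)] by simp
  qed
  ultimately show ?thesis unfolding model_def by simp
qed

lemma model_dist_act: assumes "h \<in> autQ" "x \<in> model" "y \<in> model"
  shows "model_dist (model_act h x) (model_act h y) = h (model_dist x y)"
proof (cases "x = y")
  case True then show ?thesis using autQ_zero[OF assms(1)] by simp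
next
  case False
  have ih: "inv h \<in> autQ" using autQ_inv[OF assms(1)] .
  show ?thesis
  proof (rule model_dist_eqI[OF model_act_in_model[OF assms(1,2)] model_act_in_model[OF assms(1,3)]])
    show "model_act h x (h (model_dist x y)) \<noteq> model_act h y (h (model_dist x y))"
      unfolding model_act_def using model_dist_witness(1)[OF assms(2,3) False] autQ_inv_f[OF assms(1)] by simp
    fix q assume "h (model_dist x y) < q"
    then have "inv h (h (model_dist x y)) < inv h q" using autQ_less_iff[OF ih] by simp
    then have "model_dist x y < inv h q" using autQ_inv_f[OF assms(1)] by simp
    then show "model_act h x q = model_act h y q" unfolding model_act_def using model_dist_above[OF assms(2,3)] by simp
  qed
qed

lemma model_act_comp: assumes "h \<in> autQ" "h' \<in> autQ" shows "model_act (h \<circ> h') x = model_act h (model_act h' x)"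
  unfolding model_act_def using o_inv_distrib[OF autQ_bij[OF assms(1)] autQ_bij[OF assms(2)]] by (simp add: o_assoc)

lemma model_act_id: "model_act id x = x" unfolding model_act_def by simp

lemma model_act_inv: assumes "h \<in> autQ" shows "model_act (inv h) (model_act h x) = x"
proof -
  have "model_act (inv h) (model_act h x) = model_act (inv h \<circ> h) x"
    using model_act_comp[OF autQ_inv[OF assms] assms] by simp
  also have "inv h \<circ> h = id" using autQ_inv_comp[OF assms] .
  finally show ?thesis using model_act_id by (simp add: id_def)
qed

lemma model_act_bij: assumes "h \<in> autQ" shows "bij_betw (model_act h) model model"
proof (rule bij_betw_byWitness[where f' = "model_act (inv h)"])
  show "\<forall>a\<in>model. model_act (inv h) (model_act h a) = a" using model_act_inv[OF assms] by simp
  have "model_act h (model_act (inv h) a) = a" for a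
    using model_act_inv[OF autQ_inv[OF assms]] inv_inv_eq[OF autQ_bij[OF assms]] by simp
  then show "\<forall>a'\<in>model. model_act h (model_act (inv h) a') = a'" by simp
  show "model_act h ` model \<subseteq> model" using model_act_in_model[OF assms] by blast
  show "model_act (inv h) ` model \<subseteq> model" using model_act_in_model[OF autQ_inv[OF assms]] by blast
qed

lemma model_act_cong:
  assumes "h \<in> autQ" "h' \<in> autQ" "\<forall>q\<in>{q. x q \<noteq> 0}. h' q = h q"
  shows "model_act h' x = model_act h x"
proof
  fix q
  show "model_act h' x q = model_act h x q"
  proof (cases "x (inv h q) \<noteq> 0")
    case True
    then have "h' (inv h q) = h (inv h q)" using assms(3) by simp
    then have "h' (inv h q) = q" using autQ_f_inv[OF assms(1)] by simp
    then have "inv h' q = inv h q" using autQ_inv_f[OF assms(2), of "inv h q"] by simp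
    then show ?thesis unfolding model_act_def by simp
  next
    case False
    have "x (inv h' q) = 0"
    proof (rule ccontr)
      assume "x (inv h' q) \<noteq> 0"
      then have "h (inv h' q) = h' (inv h' q)" using assms(3) by simp
      then have "h (inv h' q) = q" using autQ_f_inv[OF assms(2)] by simp
      then have "inv h q = inv h' q" using autQ_inv_f[OF assms(1), of "inv h' q"] by simp
      then show False using False \<open>x (inv h' q) \<noteq> 0\<close> by simp
    qed
    then show ?thesis using False unfolding model_act_def by simp
  qed
qed

lemma dc_autD: assumes "p \<in> dc_aut d"
  shows "bij (fst p)" "snd p \<in> autQ" "\<And>x y. d (fst p x) (fst p y) = snd p (d x y)"
  using assms unfolding dc_aut_def by auto

lemma dc_autI: assumes "bij f" "D \<in> autQ" "\<And>x y. d (f x) (f y) = D (d x y)"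
  shows "(f, D) \<in> dc_aut d"
  using assms unfolding dc_aut_def by simp

lemma dc_mult_aut: assumes "p \<in> dc_aut d" "q \<in> dc_aut d" shows "dc_mult p q \<in> dc_aut d"
proof -
  have "bij (fst p \<circ> fst q)" using dc_autD(1)[OF assms(1)] dc_autD(1)[OF assms(2)] bij_comp by blast
  moreover have "snd p \<circ> snd q \<in> autQ" using autQ_comp dc_autD(2) assms by blast
  moreover have "d ((fst p \<circ> fst q) x) ((fst p \<circ> fst q) y) = (snd p \<circ> snd q) (d x y)" for x y
    using dc_autD(3)[OF assms(1)] dc_autD(3)[OF assms(2)] by simp
  ultimately show ?thesis unfolding dc_mult_def by (simp add: dc_autI)
qed

lemma dc_iso_sub: "dc_iso d \<subseteq> dc_aut d" unfolding dc_iso_def by auto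

lemma openin_topology_generated_by_nbhd:
  assumes "\<And>x. x \<in> W \<Longrightarrow> \<exists>V\<in>S. x \<in> V \<and> V \<subseteq> W"
  shows "openin (topology_generated_by S) W"
proof -
  have "W = \<Union>{V\<in>S. V \<subseteq> W}" using assms by blast
  moreover have "generate_topology_on S (\<Union>{V\<in>S. V \<subseteq> W})"
    by (rule generate_topology_on.UN) (auto intro: generate_topology_on.Basis)
  ultimately show ?thesis by (simp add: openin_topology_generated_by_iff)
qed

lemma topology_generated_by_basis_nbhd:
  assumes cl: "\<And>V1 V2 x. V1 \<in> S \<Longrightarrow> V2 \<in> S \<Longrightarrow> x \<in> V1 \<Longrightarrow> x \<in> V2 \<Longrightarrow> \<exists>V\<in>S. x \<in> V \<and> V \<subseteq> V1 \<inter> V2"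
    and op: "openin (topology_generated_by S) W"
  shows "\<forall>x\<in>W. \<exists>V\<in>S. x \<in> V \<and> V \<subseteq> W"
proof -
  have "generate_topology_on S W" using op by (simp add: openin_topology_generated_by_iff)
  then show ?thesis
  proof (induction rule: generate_topology_on.induct)
    case Empty then show ?case by simp
  next
    case (Int a b)
    show ?case
    proof
      fix x assume "x \<in> a \<inter> b"
      then obtain V1 V2 where "V1 \<in> S" "x \<in> V1" "V1 \<subseteq> a" "V2 \<in> S" "x \<in> V2" "V2 \<subseteq> b"
        using Int.IH by blast
      then obtain V where "V \<in> S" "x \<in> V" "V \<subseteq> V1 \<inter> V2" using cl by blast
      then show "\<exists>V\<in>S. x \<in> V \<and> V \<subseteq> a \<inter> b" using \<open>V1 \<subseteq> a\<close> \<open>V2 \<subseteq> b\<close> by blast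
    qed
  next
    case (UN K)
    show ?case
    proof
      fix x assume "x \<in> \<Union>K"
      then obtain k where "k \<in> K" "x \<in> k" by blast
      then obtain V where "V \<in> S" "x \<in> V" "V \<subseteq> k" using UN.IH by blast
      then show "\<exists>V\<in>S. x \<in> V \<and> V \<subseteq> \<Union>K" using \<open>k \<in> K\<close> by blast
    qed
  next
    case (Basis s) then show ?case by blast
  qed
qed

definition autQ_basis :: "(rat \<Rightarrow> rat) set set" where
  "autQ_basis = {{D \<in> autQ. \<forall>q\<in>B. D q = D0 q} | D0 B. D0 \<in> autQ \<and> finite B \<and> B \<subseteq> Qnn}"

lemma autQ_topology_eq: "autQ_topology = topology_generated_by autQ_basis"
  unfolding autQ_topology_def autQ_basis_def ..

lemma autQ_basis_mem:
  assumes "D0 \<in> autQ" "finite B" "B \<subseteq> Qnn"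
  shows "{D \<in> autQ. \<forall>q\<in>B. D q = D0 q} \<in> autQ_basis"
  using assms unfolding autQ_basis_def by blast

lemma openin_autQ_agree:
  assumes "D0 \<in> autQ" "finite B" "B \<subseteq> Qnn"
  shows "openin autQ_topology {D \<in> autQ. \<forall>q\<in>B. D q = D0 q}"
  unfolding autQ_topology_eq by (rule topology_generated_by_Basis[OF autQ_basis_mem[OF assms]])

lemma topspace_autQ: "topspace autQ_topology = autQ"
proof -
  have "\<Union>autQ_basis = autQ"
  proof
    show "autQ \<subseteq> \<Union>autQ_basis"
    proof
      fix D assume "D \<in> autQ"
      then have "D \<in> {D' \<in> autQ. \<forall>q\<in>{}. D' q = D q}" "{D' \<in> autQ. \<forall>q\<in>{}. D' q = D q} \<in> autQ_basis"
        using autQ_basis_mem[of D "{}"] by auto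
      then show "D \<in> \<Union>autQ_basis" by blast
    qed
  qed (auto simp: autQ_basis_def)
  then show ?thesis unfolding autQ_topology_eq by simp
qed

lemma openin_autQI:
  assumes "W \<subseteq> autQ"
    and "\<And>h. h \<in> W \<Longrightarrow> \<exists>B. finite B \<and> B \<subseteq> Qnn \<and> (\<forall>h'\<in>autQ. (\<forall>q\<in>B. h' q = h q) \<longrightarrow> h' \<in> W)"
  shows "openin autQ_topology W"
  unfolding autQ_topology_eq
proof (rule openin_topology_generated_by_nbhd)
  fix h assume "h \<in> W"
  obtain B where B: "finite B" "B \<subseteq> Qnn" "\<forall>h'\<in>autQ. (\<forall>q\<in>B. h' q = h q) \<longrightarrow> h' \<in> W"
    using assms(2)[OF \<open>h \<in> W\<close>] by (elim exE conjE)
  have hQ: "h \<in> autQ" using \<open>h \<in> W\<close> assms(1) by (rule subsetD[rotated])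
  show "\<exists>V\<in>autQ_basis. h \<in> V \<and> V \<subseteq> W"
  proof (intro bexI conjI)
    show "h \<in> {D \<in> autQ. \<forall>q\<in>B. D q = h q}" using hQ by simp
    show "{D \<in> autQ. \<forall>q\<in>B. D q = h q} \<subseteq> W" using B(3) by auto
    show "{D \<in> autQ. \<forall>q\<in>B. D q = h q} \<in> autQ_basis"
      using autQ_basis_mem[OF hQ B(1,2)] .
  qed
qed

lemma continuous_map_into_autQI:
  assumes "\<And>x. x \<in> topspace X \<Longrightarrow> f x \<in> autQ"
    and "\<And>D0 B. D0 \<in> autQ \<Longrightarrow> finite B \<Longrightarrow> B \<subseteq> Qnn \<Longrightarrow>
           openin X {x \<in> topspace X. \<forall>q\<in>B. f x q = D0 q}"
  shows "continuous_map X autQ_topology f"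
  unfolding autQ_topology_eq
proof (rule continuous_on_generated_topo)
  fix U assume "U \<in> autQ_basis"
  then obtain D0 B where U: "U = {D \<in> autQ. \<forall>q\<in>B. D q = D0 q}" "D0 \<in> autQ" "finite B" "B \<subseteq> Qnn"
    unfolding autQ_basis_def by blast
  have "f -` U \<inter> topspace X = {x \<in> topspace X. \<forall>q\<in>B. f x q = D0 q}" using U(1) assms(1) by auto
  then show "openin X (f -` U \<inter> topspace X)" using assms(2)[OF U(2-4)] by simp
next
  have "autQ \<subseteq> \<Union>autQ_basis"
    using topspace_autQ unfolding autQ_topology_eq by simp
  then show "f ` topspace X \<subseteq> \<Union>autQ_basis"
    using assms(1) by blast
qed

lemma continuous_map_autQ_inv: "continuous_map autQ_topology autQ_topology inv"
proof (rule continuous_map_into_autQI)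
  show "inv h \<in> autQ" if "h \<in> topspace autQ_topology" for h
    using that topspace_autQ autQ_inv by simp
  fix D0 B assume D0: "D0 \<in> autQ" "finite B" "B \<subseteq> Qnn"
  show "openin autQ_topology {h \<in> topspace autQ_topology. \<forall>q\<in>B. inv h q = D0 q}" (is "openin _ ?S")
  proof (rule openin_autQI)
    show "?S \<subseteq> autQ" using topspace_autQ by simp
    fix h assume "h \<in> ?S"
    then have h: "h \<in> autQ" "\<forall>q\<in>B. inv h q = D0 q" using topspace_autQ by auto
    have "h' \<in> ?S" if h': "h' \<in> autQ" "\<forall>q\<in>D0 ` B. h' q = h q" for h'
    proof -
      have "inv h' q = D0 q" if "q \<in> B" for q
      proof -
        have "h' (D0 q) = q" using h' that h(2) autQ_f_inv[OF h(1), of q] by force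
        then show ?thesis using autQ_inv_f[OF h'(1), of "D0 q"] by simp
      qed
      then show ?thesis using h'(1) topspace_autQ by simp
    qed
    moreover have "D0 ` B \<subseteq> Qnn" using D0(3) autQ_nonneg[OF D0(1)] by (auto simp: Qnn_def)
    ultimately show "\<exists>B'. finite B' \<and> B' \<subseteq> Qnn \<and> (\<forall>h'\<in>autQ. (\<forall>q\<in>B'. h' q = h q) \<longrightarrow> h' \<in> ?S)"
      using D0(2) by blast
  qed
qed

definition pw_basis :: "('c \<Rightarrow> 'c \<Rightarrow> rat) \<Rightarrow> (('c \<Rightarrow> 'c) \<times> (rat \<Rightarrow> rat)) set set" where
  "pw_basis d = {{p \<in> dc_aut d. (\<forall>x\<in>A. fst p x = fst p0 x) \<and> (\<forall>q\<in>B. snd p q = snd p0 q)}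
       | p0 A B. p0 \<in> dc_aut d \<and> finite A \<and> finite B \<and> B \<subseteq> Qnn}"

definition pw_nbhd :: "('c \<Rightarrow> 'c \<Rightarrow> rat) \<Rightarrow> ('c \<Rightarrow> 'c) \<times> (rat \<Rightarrow> rat) \<Rightarrow> 'c set \<Rightarrow> rat set
   \<Rightarrow> (('c \<Rightarrow> 'c) \<times> (rat \<Rightarrow> rat)) set" where
  "pw_nbhd d p0 A B = {p \<in> dc_aut d. (\<forall>x\<in>A. fst p x = fst p0 x) \<and> (\<forall>q\<in>B. snd p q = snd p0 q)}"

lemma aut_topology_eq: "aut_topology d = topology_generated_by (pw_basis d)"
  unfolding aut_topology_def pw_basis_def ..

lemma pw_nbhd_basis: "p \<in> dc_aut d \<Longrightarrow> finite A \<Longrightarrow> finite B \<Longrightarrow> B \<subseteq> Qnn \<Longrightarrow> pw_nbhd d p A B \<in> pw_basis d"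
  unfolding pw_nbhd_def pw_basis_def by blast

lemma pw_basis_nbhd: "V \<in> pw_basis d \<Longrightarrow> \<exists>p0 A B. V = pw_nbhd d p0 A B \<and> p0 \<in> dc_aut d \<and> finite A \<and> finite B \<and> B \<subseteq> Qnn"
  unfolding pw_nbhd_def pw_basis_def by blast

lemma openin_pw_nbhd: "p \<in> dc_aut d \<Longrightarrow> finite A \<Longrightarrow> finite B \<Longrightarrow> B \<subseteq> Qnn \<Longrightarrow> openin (aut_topology d) (pw_nbhd d p A B)"
  unfolding aut_topology_eq by (rule topology_generated_by_Basis[OF pw_nbhd_basis])

lemma pw_nbhd_self: "p \<in> dc_aut d \<Longrightarrow> p \<in> pw_nbhd d p A B" unfolding pw_nbhd_def by simp

lemma pw_nbhd_subset: "pw_nbhd d p A B \<subseteq> dc_aut d" unfolding pw_nbhd_def by auto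

lemma topspace_aut: "topspace (aut_topology d) = dc_aut d"
proof -
  have "\<Union>(pw_basis d) = dc_aut d"
  proof
    show "\<Union>(pw_basis d) \<subseteq> dc_aut d" unfolding pw_basis_def by auto
    show "dc_aut d \<subseteq> \<Union>(pw_basis d)"
    proof
      fix p assume "p \<in> dc_aut d"
      then have "p \<in> pw_nbhd d p {} {}" "pw_nbhd d p {} {} \<in> pw_basis d"
        using pw_nbhd_self[of p d "{}" "{}"] pw_nbhd_basis[of p d "{}" "{}"] by auto
      then show "p \<in> \<Union>(pw_basis d)" by blast
    qed
  qed
  then show ?thesis unfolding aut_topology_eq by simp
qed

lemma openin_autI:
  assumes "W \<subseteq> dc_aut d"
    and "\<And>p. p \<in> W \<Longrightarrow> \<exists>A B. finite A \<and> finite B \<and> B \<subseteq> Qnn \<and> pw_nbhd d p A B \<subseteq> W"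
  shows "openin (aut_topology d) W"
  unfolding aut_topology_eq
proof (rule openin_topology_generated_by_nbhd)
  fix p assume pW: "p \<in> W"
  obtain A B where AB: "finite A" "finite B" "B \<subseteq> Qnn" "pw_nbhd d p A B \<subseteq> W"
    using assms(2)[OF pW] by (elim exE conjE)
  have p: "p \<in> dc_aut d" using pW assms(1) by (rule subsetD[rotated])
  show "\<exists>V\<in>pw_basis d. p \<in> V \<and> V \<subseteq> W"
  proof (rule bexI[where x="pw_nbhd d p A B"])
    show "p \<in> pw_nbhd d p A B \<and> pw_nbhd d p A B \<subseteq> W" using pw_nbhd_self[OF p] AB(4) by simp
    show "pw_nbhd d p A B \<in> pw_basis d" by (rule pw_nbhd_basis[OF p AB(1-3)])
  qed
qed

lemma pw_nbhd_recenter: assumes "p \<in> pw_nbhd d p0 A B" shows "pw_nbhd d p A B = pw_nbhd d p0 A B"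
  using assms unfolding pw_nbhd_def by auto

lemma pw_nbhd_mono: "A \<subseteq> A' \<Longrightarrow> B \<subseteq> B' \<Longrightarrow> pw_nbhd d p A' B' \<subseteq> pw_nbhd d p A B"
  unfolding pw_nbhd_def by auto

lemma openin_aut_imp_pw_nbhd:
  assumes "openin (aut_topology d) W" "p \<in> W"
  shows "\<exists>A B. finite A \<and> finite B \<and> B \<subseteq> Qnn \<and> pw_nbhd d p A B \<subseteq> W"
proof -
  have cl: "\<exists>V\<in>pw_basis d. x \<in> V \<and> V \<subseteq> V1 \<inter> V2"
    if VV: "V1 \<in> pw_basis d" "V2 \<in> pw_basis d" "x \<in> V1" "x \<in> V2" for V1 V2 x
  proof -
    obtain p1 A1 B1 where 1: "V1 = pw_nbhd d p1 A1 B1" "finite A1" "finite B1" "B1 \<subseteq> Qnn"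
      using pw_basis_nbhd[OF VV(1)] by blast
    obtain p2 A2 B2 where 2: "V2 = pw_nbhd d p2 A2 B2" "finite A2" "finite B2" "B2 \<subseteq> Qnn"
      using pw_basis_nbhd[OF VV(2)] by blast
    have x: "x \<in> dc_aut d" using VV(3) 1(1) pw_nbhd_subset by blast
    have "pw_nbhd d x (A1 \<union> A2) (B1 \<union> B2) \<subseteq> pw_nbhd d x A1 B1" "pw_nbhd d x (A1 \<union> A2) (B1 \<union> B2) \<subseteq> pw_nbhd d x A2 B2"
      by (rule pw_nbhd_mono; simp)+
    moreover have "pw_nbhd d x A1 B1 = V1" using pw_nbhd_recenter[of x d p1 A1 B1] VV(3) 1(1) by simp
    moreover have "pw_nbhd d x A2 B2 = V2" using pw_nbhd_recenter[of x d p2 A2 B2] VV(4) 2(1) by simp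
    moreover have "pw_nbhd d x (A1 \<union> A2) (B1 \<union> B2) \<in> pw_basis d"
      using pw_nbhd_basis[OF x] 1 2 by simp
    moreover have "x \<in> pw_nbhd d x (A1 \<union> A2) (B1 \<union> B2)" using pw_nbhd_self[OF x] .
    ultimately show ?thesis by blast
  qed
  obtain V where V: "V \<in> pw_basis d" "p \<in> V" "V \<subseteq> W"
    using topology_generated_by_basis_nbhd[OF cl assms(1)[unfolded aut_topology_eq]] assms(2) by blast
  obtain p0 A B where 0: "V = pw_nbhd d p0 A B" "finite A" "finite B" "B \<subseteq> Qnn"
    using pw_basis_nbhd[OF V(1)] by blast
  have "pw_nbhd d p A B = V" using pw_nbhd_recenter[of p d p0 A B] V(2) 0(1) by simp
  then show ?thesis using 0 V(3) by blast
qed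

lemma continuous_map_into_autI:
  assumes "\<And>x. x \<in> topspace X \<Longrightarrow> f x \<in> dc_aut d"
    and "\<And>p0 A B. p0 \<in> dc_aut d \<Longrightarrow> finite A \<Longrightarrow> finite B \<Longrightarrow> B \<subseteq> Qnn \<Longrightarrow>
           openin X {x \<in> topspace X. f x \<in> pw_nbhd d p0 A B}"
  shows "continuous_map X (aut_topology d) f"
  unfolding aut_topology_eq
proof (rule continuous_on_generated_topo)
  fix U assume "U \<in> pw_basis d"
  then obtain p0 A B where U: "U = pw_nbhd d p0 A B" "p0 \<in> dc_aut d" "finite A" "finite B" "B \<subseteq> Qnn"
    unfolding pw_basis_def pw_nbhd_def by blast
  have "f -` U \<inter> topspace X = {x \<in> topspace X. f x \<in> pw_nbhd d p0 A B}" using U(1) by auto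
  then show "openin X (f -` U \<inter> topspace X)" using assms(2)[OF U(2-5)] by simp
next
  show "f ` topspace X \<subseteq> \<Union>(pw_basis d)"
    using assms(1) topspace_aut[of d] unfolding aut_topology_eq by auto
qed

lemma continuous_map_snd_aut: "continuous_map (aut_topology d) autQ_topology snd"
proof (rule continuous_map_into_autQI)
  show "snd x \<in> autQ" if "x \<in> topspace (aut_topology d)" for x
    using that topspace_aut[of d] dc_autD(2)[of x d] by auto
  fix D0 B assume D0: "D0 \<in> autQ" "finite B" "B \<subseteq> Qnn"
  show "openin (aut_topology d) {x \<in> topspace (aut_topology d). \<forall>q\<in>B. snd x q = D0 q}"
  proof (rule openin_autI)
    show "{x \<in> topspace (aut_topology d). \<forall>q\<in>B. snd x q = D0 q} \<subseteq> dc_aut d"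
      using topspace_aut[of d] by auto
    fix p assume p: "p \<in> {x \<in> topspace (aut_topology d). \<forall>q\<in>B. snd x q = D0 q}"
    have "pw_nbhd d p {} B \<subseteq> {x \<in> topspace (aut_topology d). \<forall>q\<in>B. snd x q = D0 q}"
      using p topspace_aut[of d] unfolding pw_nbhd_def by auto
    then show "\<exists>A B'. finite A \<and> finite B' \<and> B' \<subseteq> Qnn \<and> pw_nbhd d p A B' \<subseteq> {x \<in> topspace (aut_topology d). \<forall>q\<in>B. snd x q = D0 q}"
      using D0 by blast
  qed
qed

lemma continuous_map_dc_mult_aut:
  "continuous_map (prod_topology (aut_topology d) (aut_topology d)) (aut_topology d) (\<lambda>(p, q). dc_mult p q)"
proof (rule continuous_map_into_autI)
  have top: "topspace (prod_topology (aut_topology d) (aut_topology d)) = dc_aut d \<times> dc_aut d"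
    by (simp add: topspace_aut)
  show "(case x of (p, q) \<Rightarrow> dc_mult p q) \<in> dc_aut d"
    if "x \<in> topspace (prod_topology (aut_topology d) (aut_topology d))" for x
    using that top dc_mult_aut by auto
  fix p0 and A :: "'a set" and B assume p0: "p0 \<in> dc_aut d" "finite A" "finite B" "B \<subseteq> Qnn"
  show "openin (prod_topology (aut_topology d) (aut_topology d))
          {x \<in> topspace (prod_topology (aut_topology d) (aut_topology d)).
           (case x of (p, q) \<Rightarrow> dc_mult p q) \<in> pw_nbhd d p0 A B}" (is "openin _ ?S")
    unfolding openin_prod_topology_alt
  proof (intro allI impI)
    fix p q assume "(p, q) \<in> ?S"
    then have p: "p \<in> dc_aut d" and q: "q \<in> dc_aut d" and pq: "dc_mult p q \<in> pw_nbhd d p0 A B"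
      using top by auto
    define U V where "U = pw_nbhd d p (fst q ` A) (snd q ` B)" and "V = pw_nbhd d q A B"
    have "snd q ` B \<subseteq> Qnn" using p0(4) autQ_nonneg[OF dc_autD(2)[OF q]] by (auto simp: Qnn_def)
    then have "openin (aut_topology d) U" "openin (aut_topology d) V"
      unfolding U_def V_def using p0(2,3,4) by (auto intro: openin_pw_nbhd[OF p] openin_pw_nbhd[OF q])
    moreover have "p \<in> U" "q \<in> V" unfolding U_def V_def by (rule pw_nbhd_self[OF p], rule pw_nbhd_self[OF q])
    moreover have "U \<times> V \<subseteq> ?S"
    proof
      fix x assume "x \<in> U \<times> V"
      then obtain p' q' where x: "x = (p', q')" "p' \<in> U" "q' \<in> V" by blast
      then have "dc_mult p' q' \<in> pw_nbhd d (dc_mult p q) A B"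
        unfolding U_def V_def pw_nbhd_def dc_mult_def using dc_mult_aut[of p' d q']
        by (auto simp: dc_mult_def)
      moreover have "p' \<in> dc_aut d" "q' \<in> dc_aut d"
        using \<open>p' \<in> U\<close> \<open>q' \<in> V\<close> unfolding U_def V_def pw_nbhd_def by auto
      ultimately show "x \<in> ?S" using pw_nbhd_recenter[OF pq] top x(1) by auto
    qed
    ultimately show "\<exists>U V. openin (aut_topology d) U \<and> openin (aut_topology d) V \<and>
                       p \<in> U \<and> q \<in> V \<and> U \<times> V \<subseteq> ?S" by blast
  qed
qed

definition dist_basis :: "('c \<Rightarrow> 'c \<Rightarrow> rat) \<Rightarrow> (('c \<Rightarrow> 'c) \<times> (rat \<Rightarrow> rat)) set set" where
  "dist_basis e = {{p \<in> dc_aut e. \<forall>x\<in>A. e (fst p x) (fst p0 x) < r}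
       | p0 A r. p0 \<in> dc_aut e \<and> finite A \<and> 0 < r}"

definition dist_nbhd :: "('c \<Rightarrow> 'c \<Rightarrow> rat) \<Rightarrow> ('c \<Rightarrow> 'c) \<times> (rat \<Rightarrow> rat) \<Rightarrow> 'c set \<Rightarrow> rat
   \<Rightarrow> (('c \<Rightarrow> 'c) \<times> (rat \<Rightarrow> rat)) set" where
  "dist_nbhd e p0 A r = {p \<in> dc_aut e. \<forall>x\<in>A. e (fst p x) (fst p0 x) < r}"

lemma autM_topology_eq: "autM_topology e = topology_generated_by (dist_basis e)"
  unfolding autM_topology_def dist_basis_def ..

lemma dist_nbhd_basis: "p \<in> dc_aut e \<Longrightarrow> finite A \<Longrightarrow> 0 < r \<Longrightarrow> dist_nbhd e p A r \<in> dist_basis e"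
  unfolding dist_nbhd_def dist_basis_def by blast

lemma dist_basis_nbhd: "V \<in> dist_basis e \<Longrightarrow> \<exists>p0 A r. V = dist_nbhd e p0 A r \<and> p0 \<in> dc_aut e \<and> finite A \<and> 0 < r"
  unfolding dist_nbhd_def dist_basis_def by blast

lemma openin_dist_nbhd: "p \<in> dc_aut e \<Longrightarrow> finite A \<Longrightarrow> 0 < r \<Longrightarrow> openin (autM_topology e) (dist_nbhd e p A r)"
  unfolding autM_topology_eq by (rule topology_generated_by_Basis[OF dist_nbhd_basis])

lemma dist_nbhd_self: "ultrametric e \<Longrightarrow> p \<in> dc_aut e \<Longrightarrow> 0 < r \<Longrightarrow> p \<in> dist_nbhd e p A r"
  unfolding dist_nbhd_def using ultrametricD(5) by fastforce

lemma dist_nbhd_subset: "dist_nbhd e p A r \<subseteq> dc_aut e" unfolding dist_nbhd_def by auto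

lemma dist_nbhd_recenter:
  assumes "ultrametric e" "p \<in> dist_nbhd e p0 A r" "A \<subseteq> A'" "r' \<le> r"
  shows "dist_nbhd e p A' r' \<subseteq> dist_nbhd e p0 A r"
proof
  fix p' assume p': "p' \<in> dist_nbhd e p A' r'"
  have "e (fst p' x) (fst p0 x) < r" if "x \<in> A" for x
  proof -
    have "e (fst p' x) (fst p x) < r" using p' that assms(3,4) unfolding dist_nbhd_def by fastforce
    moreover have "e (fst p x) (fst p0 x) < r" using assms(2) that unfolding dist_nbhd_def by simp
    ultimately show ?thesis using ultrametric_less_trans[OF assms(1)] by blast
  qed
  then show "p' \<in> dist_nbhd e p0 A r" using p' unfolding dist_nbhd_def by simp
qed

lemma topspace_autM: assumes "ultrametric e" shows "topspace (autM_topology e) = dc_aut e"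
proof -
  have "\<Union>(dist_basis e) = dc_aut e"
  proof
    show "\<Union>(dist_basis e) \<subseteq> dc_aut e" unfolding dist_basis_def by auto
    show "dc_aut e \<subseteq> \<Union>(dist_basis e)"
    proof
      fix p assume "p \<in> dc_aut e"
      then have "p \<in> dist_nbhd e p {} 1" "dist_nbhd e p {} 1 \<in> dist_basis e"
        using dist_nbhd_self[OF assms, of p 1 "{}"] dist_nbhd_basis[of p e "{}" 1] by auto
      then show "p \<in> \<Union>(dist_basis e)" by blast
    qed
  qed
  then show ?thesis unfolding autM_topology_eq by simp
qed

lemma openin_autMI:
  assumes "ultrametric e" "W \<subseteq> dc_aut e"
    and "\<And>p. p \<in> W \<Longrightarrow> \<exists>A r. finite A \<and> 0 < r \<and> dist_nbhd e p A r \<subseteq> W"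
  shows "openin (autM_topology e) W"
  unfolding autM_topology_eq
proof (rule openin_topology_generated_by_nbhd)
  fix p assume pW: "p \<in> W"
  obtain A r where Ar: "finite A" "0 < r" "dist_nbhd e p A r \<subseteq> W"
    using assms(3)[OF pW] by (elim exE conjE)
  have p: "p \<in> dc_aut e" using pW assms(2) by (rule subsetD[rotated])
  show "\<exists>V\<in>dist_basis e. p \<in> V \<and> V \<subseteq> W"
  proof (rule bexI[where x="dist_nbhd e p A r"])
    show "p \<in> dist_nbhd e p A r \<and> dist_nbhd e p A r \<subseteq> W" using dist_nbhd_self[OF assms(1) p Ar(2)] Ar(3) by simp
    show "dist_nbhd e p A r \<in> dist_basis e" by (rule dist_nbhd_basis[OF p Ar(1,2)])
  qed
qed

lemma openin_autM_imp_dist_nbhd: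
  assumes ultrametric_d: "ultrametric e" and W: "openin (autM_topology e) W" "p \<in> W"
  shows "\<exists>A r. finite A \<and> 0 < r \<and> dist_nbhd e p A r \<subseteq> W"
proof -
  have cl: "\<exists>V\<in>dist_basis e. x \<in> V \<and> V \<subseteq> V1 \<inter> V2"
    if VV: "V1 \<in> dist_basis e" "V2 \<in> dist_basis e" "x \<in> V1" "x \<in> V2" for V1 V2 x
  proof -
    obtain p1 A1 r1 where 1: "V1 = dist_nbhd e p1 A1 r1" "finite A1" "0 < r1"
      using dist_basis_nbhd[OF VV(1)] by blast
    obtain p2 A2 r2 where 2: "V2 = dist_nbhd e p2 A2 r2" "finite A2" "0 < r2"
      using dist_basis_nbhd[OF VV(2)] by blast
    have x: "x \<in> dc_aut e" using VV(3) 1(1) dist_nbhd_subset by blast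
    have "dist_nbhd e x (A1 \<union> A2) (min r1 r2) \<subseteq> V1"
      using dist_nbhd_recenter[OF ultrametric_d, of x p1 A1 r1 "A1 \<union> A2" "min r1 r2"] VV(3) 1(1) by simp
    moreover have "dist_nbhd e x (A1 \<union> A2) (min r1 r2) \<subseteq> V2"
      using dist_nbhd_recenter[OF ultrametric_d, of x p2 A2 r2 "A1 \<union> A2" "min r1 r2"] VV(4) 2(1) by simp
    moreover have "dist_nbhd e x (A1 \<union> A2) (min r1 r2) \<in> dist_basis e"
      using dist_nbhd_basis[OF x] 1 2 by simp
    moreover have "x \<in> dist_nbhd e x (A1 \<union> A2) (min r1 r2)" using dist_nbhd_self[OF ultrametric_d x] 1 2 by simp
    ultimately show ?thesis by blast
  qed
  obtain V where V: "V \<in> dist_basis e" "p \<in> V" "V \<subseteq> W"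
    using topology_generated_by_basis_nbhd[OF cl W(1)[unfolded autM_topology_eq]] W(2) by blast
  obtain p0 A r where 0: "V = dist_nbhd e p0 A r" "finite A" "0 < r"
    using dist_basis_nbhd[OF V(1)] by blast
  have "dist_nbhd e p A r \<subseteq> V" using dist_nbhd_recenter[OF ultrametric_d, of p p0 A r A r] V(2) 0(1) by simp
  then show ?thesis using 0 V(3) by blast
qed

lemma continuous_map_into_autMI:
  assumes "\<And>x. x \<in> topspace X \<Longrightarrow> f x \<in> dc_aut e"
    and "\<And>p0 A r. p0 \<in> dc_aut e \<Longrightarrow> finite A \<Longrightarrow> 0 < r \<Longrightarrow>
           openin X {x \<in> topspace X. f x \<in> dist_nbhd e p0 A r}"
  shows "continuous_map X (autM_topology e) f"
  unfolding autM_topology_eq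
proof (rule continuous_on_generated_topo)
  fix U assume "U \<in> dist_basis e"
  then obtain p0 A r where U: "U = dist_nbhd e p0 A r" "p0 \<in> dc_aut e" "finite A" "0 < r"
    unfolding dist_basis_def dist_nbhd_def by blast
  have "f -` U \<inter> topspace X = {x \<in> topspace X. f x \<in> dist_nbhd e p0 A r}" using U(1) by auto
  then show "openin X (f -` U \<inter> topspace X)" using assms(2)[OF U(2-4)] by simp
next
  have "dc_aut e \<subseteq> \<Union>(dist_basis e)"
  proof
    fix p assume "p \<in> dc_aut e"
    have 1: "dist_nbhd e p {} 1 \<in> dist_basis e" using dist_nbhd_basis[of p e "{}" 1] \<open>p \<in> dc_aut e\<close> by simp
    have 2: "p \<in> dist_nbhd e p {} 1" unfolding dist_nbhd_def using \<open>p \<in> dc_aut e\<close> by simp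
    show "p \<in> \<Union>(dist_basis e)" using 1 2 by blast
  qed
  then show "f ` topspace X \<subseteq> \<Union>(dist_basis e)" using assms(1) by blast
qed

lemma dc_aut_snd_eq_if_close:
  assumes ue: "ultrametric e" and p: "p \<in> dc_aut e" and p': "p' \<in> dc_aut e" and uv: "e u v = q"
    and close: "e (fst p' u) (fst p u) < r" "e (fst p' v) (fst p v) < r" and r: "r \<le> snd p q"
  shows "snd p' q = snd p q"
proof -
  have "e (fst p u) (fst p' u) < r" "e (fst p v) (fst p' v) < r"
    using close ultrametricD(3)[OF ue] by metis+
  moreover have "r \<le> e (fst p u) (fst p v)" using r dc_autD(3)[OF p, of u v] uv by simp
  ultimately have "e (fst p' u) (fst p' v) = e (fst p u) (fst p v)"
    using ultrametric_dist_stable[OF ue] by blast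
  then show ?thesis using dc_autD(3)[OF p, of u v] dc_autD(3)[OF p', of u v] uv by simp
qed

lemma continuous_map_snd_autM:
  assumes ue: "ultrametric e" and dists: "\<And>q. 0 < q \<Longrightarrow> \<exists>u v. e u v = q"
  shows "continuous_map (autM_topology e) autQ_topology snd"
proof (rule continuous_map_into_autQI)
  show "snd x \<in> autQ" if "x \<in> topspace (autM_topology e)" for x
    using that topspace_autM[OF ue] dc_autD(2)[of x e] by auto
  fix D0 B assume D0: "D0 \<in> autQ" "finite B" "B \<subseteq> Qnn"
  show "openin (autM_topology e) {x \<in> topspace (autM_topology e). \<forall>q\<in>B. snd x q = D0 q}"
    (is "openin _ ?S")
  proof (rule openin_autMI[OF ue])
    show "?S \<subseteq> dc_aut e" using topspace_autM[OF ue] by simp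
    fix p assume "p \<in> ?S"
    then have p: "p \<in> dc_aut e" and pB: "\<forall>q\<in>B. snd p q = D0 q" using topspace_autM[OF ue] by auto
    have D: "snd p \<in> autQ" using dc_autD(2)[OF p] .
    have "\<forall>q. \<exists>uv. 0 < q \<longrightarrow> e (fst uv) (snd uv) = q" using dists by fastforce
    then obtain uv where uv: "\<And>q. 0 < q \<Longrightarrow> e (fst (uv q)) (snd (uv q)) = q" by metis
    define Bp where "Bp = {q\<in>B. 0 < q}"
    define A where "A = (fst \<circ> uv) ` Bp \<union> (snd \<circ> uv) ` Bp"
    define r where "r = Min (insert 1 (snd p ` Bp))"
    have fBp: "finite Bp" using D0(2) unfolding Bp_def by simp
    then have fA: "finite A" unfolding A_def by simp
    have "\<forall>t\<in>insert 1 (snd p ` Bp). 0 < t" using autQ_pos_iff[OF D] unfolding Bp_def by auto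
    then have rpos: "0 < r" unfolding r_def using fBp by (simp add: Min_gr_iff)
    have rle: "r \<le> snd p q" if "q \<in> Bp" for q
      unfolding r_def using fBp that by (simp add: Min_le_iff)
    have "dist_nbhd e p A r \<subseteq> ?S"
    proof
      fix p' assume p'_near: "p' \<in> dist_nbhd e p A r"
      have p': "p' \<in> dc_aut e" using p'_near dist_nbhd_subset by blast
      have "snd p' q = snd p q" if "q \<in> B" for q
      proof (cases "0 < q")
        case False
        then have "q = 0" using that D0(3) unfolding Qnn_def by force
        then show ?thesis using autQ_zero[OF D] autQ_zero[OF dc_autD(2)[OF p']] by simp
      next
        case True
        then have "q \<in> Bp" unfolding Bp_def using that by simp
        then have "fst (uv q) \<in> A" "snd (uv q) \<in> A" unfolding A_def by auto
        then show ?thesis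
          using dc_aut_snd_eq_if_close[OF ue p p' uv[OF True]] p'_near rle[OF \<open>q \<in> Bp\<close>]
          unfolding dist_nbhd_def by auto
      qed
      then show "p' \<in> ?S" using p' pB topspace_autM[OF ue] by simp
    qed
    then show "\<exists>A r. finite A \<and> 0 < r \<and> dist_nbhd e p A r \<subseteq> ?S" using fA rpos by blast
  qed
qed

lemma dc_mult_in_dist_nbhd:
  assumes ue: "ultrametric e" and pq: "dc_mult p q \<in> dist_nbhd e p0 A r"
    and p': "p' \<in> dist_nbhd e p (fst q ` A) r" "snd p' \<epsilon> = r" and q': "q' \<in> dist_nbhd e q A \<epsilon>"
  shows "dc_mult p' q' \<in> dist_nbhd e p0 A r"
proof -
  have p'_aut: "p' \<in> dc_aut e" and q'_aut: "q' \<in> dc_aut e" using p'(1) q' unfolding dist_nbhd_def by auto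
  have "e (fst p' (fst q' a)) (fst p0 a) < r" if "a \<in> A" for a
  proof -
    have "e (fst q' a) (fst q a) < \<epsilon>" using q' that unfolding dist_nbhd_def by simp
    then have "snd p' (e (fst q' a) (fst q a)) < r" using autQ_less_iff[OF dc_autD(2)[OF p'_aut]] p'(2) by metis
    then have 1: "e (fst p' (fst q' a)) (fst p' (fst q a)) < r" using dc_autD(3)[OF p'_aut] by simp
    have 2: "e (fst p' (fst q a)) (fst p (fst q a)) < r" using p'(1) that unfolding dist_nbhd_def by simp
    have 3: "e (fst p (fst q a)) (fst p0 a) < r" using pq that unfolding dist_nbhd_def dc_mult_def by simp
    show ?thesis using ultrametric_less_trans3[OF ue 1 2 3] .
  qed
  then show ?thesis using dc_mult_aut[OF p'_aut q'_aut] unfolding dist_nbhd_def dc_mult_def by auto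
qed

lemma continuous_map_dc_mult_autM:
  assumes ue: "ultrametric e" and csnd: "continuous_map (autM_topology e) autQ_topology snd"
  shows "continuous_map (prod_topology (autM_topology e) (autM_topology e)) (autM_topology e)
           (\<lambda>(p, q). dc_mult p q)"
proof (rule continuous_map_into_autMI)
  have top: "topspace (prod_topology (autM_topology e) (autM_topology e)) = dc_aut e \<times> dc_aut e"
    by (simp add: topspace_autM[OF ue])
  show "(case x of (p, q) \<Rightarrow> dc_mult p q) \<in> dc_aut e"
    if "x \<in> topspace (prod_topology (autM_topology e) (autM_topology e))" for x
    using that top dc_mult_aut by auto
  fix p0 and A :: "'a set" and r :: rat assume p0: "p0 \<in> dc_aut e" "finite A" "0 < r"
  show "openin (prod_topology (autM_topology e) (autM_topology e))
          {x \<in> topspace (prod_topology (autM_topology e) (autM_topology e)).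
           (case x of (p, q) \<Rightarrow> dc_mult p q) \<in> dist_nbhd e p0 A r}" (is "openin _ ?S")
    unfolding openin_prod_topology_alt
  proof (intro allI impI)
    fix p q assume "(p, q) \<in> ?S"
    then have p: "p \<in> dc_aut e" and q: "q \<in> dc_aut e" and pq: "dc_mult p q \<in> dist_nbhd e p0 A r"
      using top by auto
    have D: "snd p \<in> autQ" using dc_autD(2)[OF p] .
    define \<epsilon> where "\<epsilon> = inv (snd p) r"
    have \<epsilon>: "0 < \<epsilon>" "snd p \<epsilon> = r" unfolding \<epsilon>_def using autQ_inv_pos[OF D p0(3)] autQ_f_inv[OF D] by auto
    define U where "U = dist_nbhd e p (fst q ` A) r \<inter>
      {p' \<in> topspace (autM_topology e). snd p' \<in> {D' \<in> autQ. \<forall>t\<in>{\<epsilon>}. D' t = snd p t}}"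
    define V where "V = dist_nbhd e q A \<epsilon>"
    have "openin (autM_topology e) U"
      unfolding U_def using \<epsilon>(1) p0(2,3) p
      by (intro openin_Int openin_dist_nbhd openin_continuous_map_preimage[OF csnd] openin_autQ_agree[OF D])
        (auto simp: Qnn_def)
    moreover have "openin (autM_topology e) V" unfolding V_def by (rule openin_dist_nbhd[OF q p0(2) \<epsilon>(1)])
    moreover have "p \<in> U" "q \<in> V"
      unfolding U_def V_def using dist_nbhd_self[OF ue] p q p0(3) \<epsilon>(1) D topspace_autM[OF ue] by auto
    moreover have "U \<times> V \<subseteq> ?S"
    proof
      fix x assume "x \<in> U \<times> V"
      then obtain p' q' where x: "x = (p', q')" "p' \<in> U" "q' \<in> V" by blast
      then have "dc_mult p' q' \<in> dist_nbhd e p0 A r"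
        using dc_mult_in_dist_nbhd[OF ue pq, of p' \<epsilon> q'] \<epsilon>(2) unfolding U_def V_def by auto
      moreover have "p' \<in> dc_aut e" "q' \<in> dc_aut e" using x(2,3) unfolding U_def V_def dist_nbhd_def by auto
      ultimately show "x \<in> ?S" using top x(1) by auto
    qed
    ultimately show "\<exists>U V. openin (autM_topology e) U \<and> openin (autM_topology e) V \<and>
                       p \<in> U \<and> q \<in> V \<and> U \<times> V \<subseteq> ?S" by blast
  qed
qed

lemma bij_idempotent_eq_id: assumes "bij F" "F = F \<circ> F" shows "F = id"
proof
  fix x
  have "F x = F (F x)" using fun_cong[OF assms(2), of x] by simp
  then show "F x = id x" using bij_is_inj[OF assms(1)] by (simp add: inj_eq)
qed

locale hom_section =
  fixes d :: "'c \<Rightarrow> 'c \<Rightarrow> rat" and s :: "(rat \<Rightarrow> rat) \<Rightarrow> ('c \<Rightarrow> 'c) \<times> (rat \<Rightarrow> rat)"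
  assumes s_aut: "\<And>h. h \<in> autQ \<Longrightarrow> s h \<in> dc_aut d"
    and s_hom: "\<And>h h'. h \<in> autQ \<Longrightarrow> h' \<in> autQ \<Longrightarrow> s (h \<circ> h') = dc_mult (s h) (s h')"
    and s_snd: "\<And>h. h \<in> autQ \<Longrightarrow> snd (s h) = h"
begin

lemma s_id: "s id = (id, id)"
proof -
  have "s id = dc_mult (s id) (s id)" using s_hom[OF autQ_id autQ_id] by simp
  then have "fst (s id) = fst (s id) \<circ> fst (s id)" unfolding dc_mult_def by (simp add: prod_eq_iff)
  then have "fst (s id) = id" using bij_idempotent_eq_id dc_autD(1)[OF s_aut[OF autQ_id]] by blast
  then show ?thesis using s_snd[OF autQ_id] by (simp add: prod_eq_iff)
qed

lemma s_inv_cancel: assumes "h \<in> autQ"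
  shows "fst (s h) \<circ> fst (s (inv h)) = id" "fst (s (inv h)) \<circ> fst (s h) = id"
proof -
  have "s (h \<circ> inv h) = dc_mult (s h) (s (inv h))" using s_hom[OF assms autQ_inv[OF assms]] .
  then show "fst (s h) \<circ> fst (s (inv h)) = id" using autQ_comp_inv[OF assms] s_id unfolding dc_mult_def by simp
  have "s (inv h \<circ> h) = dc_mult (s (inv h)) (s h)" using s_hom[OF autQ_inv[OF assms] assms] .
  then show "fst (s (inv h)) \<circ> fst (s h) = id" using autQ_inv_comp[OF assms] s_id unfolding dc_mult_def by simp
qed

lemma untwist_in_dc_iso: assumes "p \<in> dc_aut d" shows "dc_mult p (s (inv (snd p))) \<in> dc_iso d"
proof -
  have D: "snd p \<in> autQ" using dc_autD(2)[OF assms] .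
  have "dc_mult p (s (inv (snd p))) \<in> dc_aut d" using dc_mult_aut[OF assms s_aut[OF autQ_inv[OF D]]] .
  moreover have "snd (dc_mult p (s (inv (snd p)))) = id"
    unfolding dc_mult_def using s_snd[OF autQ_inv[OF D]] autQ_comp_inv[OF D] by simp
  ultimately show ?thesis unfolding dc_iso_def by simp
qed

lemma snd_twist: assumes "n \<in> dc_iso d" "h \<in> autQ" shows "snd (dc_mult n (s h)) = h"
  using assms s_snd unfolding dc_mult_def dc_iso_def by simp

lemma untwist_twist: assumes "n \<in> dc_iso d" "h \<in> autQ"
  shows "dc_mult (dc_mult n (s h)) (s (inv h)) = n"
proof -
  have "snd n = id" using assms(1) unfolding dc_iso_def by simp
  then show ?thesis
    using s_inv_cancel(1)[OF assms(2)] autQ_comp_inv[OF assms(2)] s_snd[OF assms(2)] s_snd[OF autQ_inv[OF assms(2)]]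
    unfolding dc_mult_def by (simp add: comp_assoc prod_eq_iff)
qed

lemma twist_untwist: assumes "p \<in> dc_aut d"
  shows "dc_mult (dc_mult p (s (inv (snd p)))) (s (snd p)) = p"
proof -
  have D: "snd p \<in> autQ" using dc_autD(2)[OF assms] .
  show ?thesis
    using s_inv_cancel(2)[OF D] autQ_inv_comp[OF D] s_snd[OF D] s_snd[OF autQ_inv[OF D]]
    unfolding dc_mult_def by (simp add: comp_assoc prod_eq_iff)
qed

lemma sd_mult_hom:
  assumes "x \<in> dc_iso d \<times> autQ" "y \<in> dc_iso d \<times> autQ"
  shows "dc_mult (fst (sd_mult s x y)) (s (snd (sd_mult s x y)))
           = dc_mult (dc_mult (fst x) (s (snd x))) (dc_mult (fst y) (s (snd y)))"
proof -
  have hx: "snd x \<in> autQ" and hy: "snd y \<in> autQ" using assms by auto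
  have fst_cancel: "fst (dc_inv (s (snd x))) \<circ> fst (s (snd x)) = id"
    using dc_autD(1)[OF s_aut[OF hx]] unfolding dc_inv_def by (simp add: bij_is_inj inv_o_cancel)
  have snd_cancel: "snd (dc_inv (s (snd x))) \<circ> snd x = id"
  proof
    fix q
    show "(snd (dc_inv (s (snd x))) \<circ> snd x) q = id q"
    proof (cases "0 \<le> q")
      case True
      have "inv_into Qnn (snd x) (snd x q) = q"
        using inv_into_f_f[OF bij_betw_imp_inj_on[OF autQD(1)[OF hx]]] True by (simp add: Qnn_def)
      then show ?thesis unfolding dc_inv_def using s_snd[OF hx] autQ_nonneg[OF hx True] by simp
    next
      case False
      then show ?thesis unfolding dc_inv_def using s_snd[OF hx] autQD(3)[OF hx] by simp
    qed
  qed
  have e0: "s (snd x \<circ> snd y) = (fst (s (snd x)) \<circ> fst (s (snd y)), snd x \<circ> snd y)"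
    using s_hom[OF hx hy] s_snd[OF hx] s_snd[OF hy] unfolding dc_mult_def by simp
  have e1: "fst (dc_inv (s (snd x))) \<circ> (fst (s (snd x)) \<circ> G) = G" for G
    using fst_cancel by (simp add: comp_assoc[symmetric])
  have e2: "snd (dc_inv (s (snd x))) \<circ> (snd x \<circ> G) = G" for G
    using snd_cancel by (simp add: comp_assoc[symmetric])
  show ?thesis unfolding sd_mult_def dc_mult_def
    by (simp add: e0 comp_assoc e1 e2 s_snd[OF hx] s_snd[OF hy] del: comp_apply)
qed

end

lemma homeomorphic_map_twist:
  assumes top: "topspace T = dc_aut d"
    and csnd: "continuous_map T autQ_topology snd"
    and cmult: "continuous_map (prod_topology T T) T (\<lambda>(p, q). dc_mult p q)"
    and hs: "hom_section d s"
    and cs: "continuous_map autQ_topology T s"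
  shows "homeomorphic_map (prod_topology (subtopology T (dc_iso d)) autQ_topology) T
           (\<lambda>x. dc_mult (fst x) (s (snd x)))"
proof -
  interpret hom_section d s by (rule hs)
  let ?N = "subtopology T (dc_iso d)"
  have top_NQ: "topspace (prod_topology ?N autQ_topology) = dc_iso d \<times> autQ"
    using top topspace_autQ dc_iso_sub by auto
  have twist: "continuous_map (prod_topology ?N autQ_topology) T (\<lambda>x. dc_mult (fst x) (s (snd x)))"
  proof -
    have "continuous_map (prod_topology ?N autQ_topology) T fst"
      using continuous_map_fst continuous_map_in_subtopology by blast
    moreover have "continuous_map (prod_topology ?N autQ_topology) T (s \<circ> snd)"
      using continuous_map_compose[OF continuous_map_snd cs] .
    ultimately have "continuous_map (prod_topology ?N autQ_topology) (prod_topology T T) (\<lambda>x. (fst x, s (snd x)))"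
      by (simp add: continuous_map_pairwise o_def)
    from continuous_map_compose[OF this cmult] show ?thesis by (simp add: o_def)
  qed
  have untwist: "continuous_map T ?N (\<lambda>p. dc_mult p (s (inv (snd p))))"
  proof -
    have "continuous_map T T (s \<circ> inv \<circ> snd)"
      using continuous_map_compose[OF continuous_map_compose[OF csnd continuous_map_autQ_inv] cs]
      by (simp add: o_assoc)
    then have "continuous_map T (prod_topology T T) (\<lambda>p. (p, s (inv (snd p))))"
      by (simp add: continuous_map_pairwise o_def)
    from continuous_map_compose[OF this cmult] untwist_in_dc_iso top show ?thesis
      by (auto simp: o_def continuous_map_in_subtopology)
  qed
  show ?thesis
    unfolding homeomorphic_map_maps homeomorphic_maps_def
  proof (intro exI[where x = "\<lambda>p. (dc_mult p (s (inv (snd p))), snd p)"] conjI ballI)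
    show "continuous_map T (prod_topology ?N autQ_topology) (\<lambda>p. (dc_mult p (s (inv (snd p))), snd p))"
      using untwist csnd by (simp add: continuous_map_pairwise o_def)
  next
    fix x assume "x \<in> topspace (prod_topology ?N autQ_topology)"
    then show "(\<lambda>p. (dc_mult p (s (inv (snd p))), snd p)) (dc_mult (fst x) (s (snd x))) = x"
      using top_NQ snd_twist untwist_twist by (auto simp: prod_eq_iff)
  next
    fix p assume "p \<in> topspace T"
    then show "dc_mult (fst (dc_mult p (s (inv (snd p))), snd p)) (s (snd (dc_mult p (s (inv (snd p))), snd p))) = p"
      using top twist_untwist by simp
  qed (rule twist)
qed

lemma projection_splitsI:
  assumes top: "topspace T = dc_aut d"
    and csnd: "continuous_map T autQ_topology snd"
    and osnd: "open_map T autQ_topology snd"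
    and cmult: "continuous_map (prod_topology T T) T (\<lambda>(p, q). dc_mult p q)"
    and hs: "hom_section d s"
    and cs: "continuous_map autQ_topology T s"
  shows "projection_splits d T"
proof -
  interpret hom_section d s by (rule hs)
  note homeo = homeomorphic_map_twist[OF top csnd cmult hs cs]
  have "snd ` dc_aut d = autQ"
    using dc_autD(2) s_aut s_snd by (auto intro!: image_eqI)
  moreover have "{p \<in> dc_aut d. snd p = id} = dc_iso d" unfolding dc_iso_def by simp
  moreover have "\<forall>p\<in>dc_aut d. \<forall>q\<in>dc_aut d. snd (dc_mult p q) = snd p \<circ> snd q"
    unfolding dc_mult_def by simp
  moreover have "\<forall>x\<in>dc_iso d \<times> autQ. \<forall>y\<in>dc_iso d \<times> autQ.
      dc_mult (fst (sd_mult s x y)) (s (snd (sd_mult s x y)))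
        = dc_mult (dc_mult (fst x) (s (snd x))) (dc_mult (fst y) (s (snd y)))"
    using sd_mult_hom by blast
  moreover have "s \<in> autQ \<rightarrow> dc_aut d" using s_aut by blast
  ultimately show ?thesis unfolding projection_splits_def
    using csnd osnd cs homeo s_hom s_snd by blast
qed

locale rational_urysohn =
  fixes d :: "'a \<Rightarrow> 'a \<Rightarrow> rat"
  assumes ru: "rational_urysohn_ultrametric d"
begin

lemma ultrametric_d: "ultrametric d" using ru unfolding rational_urysohn_ultrametric_def by simp

lemma countable_UNIV: "countable (UNIV :: 'a set)" using ru unfolding rational_urysohn_ultrametric_def by simp

lemma ultrametric_on_d: "ultrametric_on UNIV d" using ultrametric_imp_ultrametric_on[OF ultrametric_d] .

lemma extension_property_on_d: "extension_property_on UNIV d"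
  unfolding extension_property_on_def
proof (intro allI impI)
  fix A r assume H: "finite A \<and> A \<subseteq> (UNIV :: 'a set) \<and> (\<forall>a\<in>A. 0 < r a)
        \<and> (\<forall>a\<in>A. \<forall>b\<in>A. d a b \<le> max (r a) (r b) \<and> r a \<le> max (d a b) (r b))"
  have "\<exists>z. \<forall>a\<in>A. d z a = r a"
    using ru[unfolded rational_urysohn_ultrametric_def] H by blast
  then show "\<exists>z\<in>UNIV. \<forall>a\<in>A. d z a = r a" by simp
qed

lemma ex_isometry_model:
  "\<exists>\<phi>. bij_betw \<phi> UNIV model \<and> (\<forall>x\<in>UNIV. \<forall>y\<in>UNIV. model_dist (\<phi> x) (\<phi> y) = d x y)"
  using back_and_forth[OF countable_UNIV countable_model ultrametric_on_d ultrametric_on_model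
      extension_property_on_d extension_property_on_model, of "{}"] by blast

definition to_model :: "'a \<Rightarrow> (rat \<Rightarrow> nat)" where
  "to_model = (SOME \<phi>. bij_betw \<phi> UNIV model \<and> (\<forall>x\<in>UNIV. \<forall>y\<in>UNIV. model_dist (\<phi> x) (\<phi> y) = d x y))"

definition from_model :: "(rat \<Rightarrow> nat) \<Rightarrow> 'a" where "from_model = inv_into UNIV to_model"

lemma to_model_bij: "bij_betw to_model UNIV model"
  and to_model_isometric: "model_dist (to_model x) (to_model y) = d x y"
  using someI_ex[OF ex_isometry_model] unfolding to_model_def by simp_all

lemma to_model_in_model: "to_model x \<in> model" using bij_betw_apply[OF to_model_bij] by simp

lemma to_from_model: "y \<in> model \<Longrightarrow> to_model (from_model y) = y"
  unfolding from_model_def using bij_betw_inv_into_right[OF to_model_bij] by simp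

lemma from_model_bij: "bij_betw from_model model UNIV"
  unfolding from_model_def using bij_betw_inv_into[OF to_model_bij] .

lemma from_model_isometric:
  assumes "y \<in> model" "y' \<in> model" shows "d (from_model y) (from_model y') = model_dist y y'"
  using to_model_isometric[of "from_model y" "from_model y'"] to_from_model[OF assms(1)] to_from_model[OF assms(2)]
  by simp

definition splitU :: "(rat \<Rightarrow> rat) \<Rightarrow> ('a \<Rightarrow> 'a) \<times> (rat \<Rightarrow> rat)" where
  "splitU h = (from_model \<circ> model_act h \<circ> to_model, h)"

lemma splitU_aut: assumes "h \<in> autQ" shows "splitU h \<in> dc_aut d"
proof -
  have "bij_betw (from_model \<circ> model_act h \<circ> to_model) UNIV UNIV"
    using bij_betw_trans[OF bij_betw_trans[OF to_model_bij model_act_bij[OF assms]] from_model_bij]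
    by (simp add: o_assoc)
  moreover have "d (from_model (model_act h (to_model x))) (from_model (model_act h (to_model y))) = h (d x y)"
    for x y
    using from_model_isometric[OF model_act_in_model[OF assms to_model_in_model]
        model_act_in_model[OF assms to_model_in_model]]
      model_dist_act[OF assms to_model_in_model to_model_in_model] to_model_isometric
    by simp
  ultimately show ?thesis unfolding splitU_def using assms by (intro dc_autI) auto
qed

lemma splitU_comp: assumes "h \<in> autQ" "h' \<in> autQ" shows "splitU (h \<circ> h') = dc_mult (splitU h) (splitU h')"
proof -
  have "from_model (model_act (h \<circ> h') (to_model x))
      = from_model (model_act h (to_model (from_model (model_act h' (to_model x)))))" for x
    using model_act_comp[OF assms] to_from_model[OF model_act_in_model[OF assms(2) to_model_in_model]] by simp
  then show ?thesis unfolding splitU_def dc_mult_def by auto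
qed

lemma snd_splitU: "snd (splitU h) = h" unfolding splitU_def by simp

lemma hom_section_splitU: "hom_section d splitU"
  by (unfold_locales) (auto simp: splitU_aut splitU_comp snd_splitU)

lemma model_support_Qnn: assumes "x \<in> model" shows "{q. x q \<noteq> 0} \<subseteq> Qnn"
proof
  fix q assume "q \<in> {q. x q \<noteq> 0}"
  then have "\<not> q \<le> 0" using modelD(2)[OF assms] by auto
  then show "q \<in> Qnn" unfolding Qnn_def by simp
qed

lemma splitU_local:
  assumes "h \<in> autQ" "finite A"
  shows "\<exists>B. finite B \<and> B \<subseteq> Qnn \<and> (\<forall>h'\<in>autQ. (\<forall>q\<in>B. h' q = h q) \<longrightarrow> (\<forall>a\<in>A. fst (splitU h') a = fst (splitU h) a))"
proof -
  define B where "B = (\<Union>a\<in>A. {q. to_model a q \<noteq> 0})"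
  have "finite B" unfolding B_def using assms(2) modelD(1)[OF to_model_in_model] by blast
  moreover have "B \<subseteq> Qnn" unfolding B_def using model_support_Qnn[OF to_model_in_model] by blast
  moreover have "\<forall>a\<in>A. fst (splitU h') a = fst (splitU h) a" if "h' \<in> autQ" "\<forall>q\<in>B. h' q = h q" for h'
  proof
    fix a assume "a \<in> A"
    then have "\<forall>q\<in>{q. to_model a q \<noteq> 0}. h' q = h q" using that(2) unfolding B_def by blast
    then have "model_act h' (to_model a) = model_act h (to_model a)" using model_act_cong[OF assms(1) that(1)] by blast
    then show "fst (splitU h') a = fst (splitU h) a" unfolding splitU_def by simp
  qed
  ultimately show ?thesis by blast
qed

lemma continuous_map_splitU: "continuous_map autQ_topology (aut_topology d) splitU"
proof (rule continuous_map_into_autI)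
  show "splitU x \<in> dc_aut d" if "x \<in> topspace autQ_topology" for x
    using that splitU_aut topspace_autQ by simp
  fix p0 and A :: "'a set" and B assume p0: "p0 \<in> dc_aut d" "finite A" "finite B" "B \<subseteq> Qnn"
  show "openin autQ_topology {x \<in> topspace autQ_topology. splitU x \<in> pw_nbhd d p0 A B}"
  proof (rule openin_autQI)
    show "{x \<in> topspace autQ_topology. splitU x \<in> pw_nbhd d p0 A B} \<subseteq> autQ" using topspace_autQ by simp
    fix h assume "h \<in> {x \<in> topspace autQ_topology. splitU x \<in> pw_nbhd d p0 A B}"
    then have h: "h \<in> autQ" "splitU h \<in> pw_nbhd d p0 A B" using topspace_autQ by auto
    obtain Bs where Bs: "finite Bs" "Bs \<subseteq> Qnn"
      "\<forall>h'\<in>autQ. (\<forall>q\<in>Bs. h' q = h q) \<longrightarrow> (\<forall>a\<in>A. fst (splitU h') a = fst (splitU h) a)"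
      using splitU_local[OF h(1) p0(2)] by blast
    have "h' \<in> {x \<in> topspace autQ_topology. splitU x \<in> pw_nbhd d p0 A B}"
      if h': "h' \<in> autQ" "\<forall>q\<in>B \<union> Bs. h' q = h q" for h'
    proof -
      have "\<forall>a\<in>A. fst (splitU h') a = fst (splitU h) a" using Bs(3) h' by simp
      then have "splitU h' \<in> pw_nbhd d p0 A B" using h(2) h' splitU_aut[OF h'(1)] snd_splitU[of h'] snd_splitU[of h]
        unfolding pw_nbhd_def by auto
      then show ?thesis using h'(1) topspace_autQ by simp
    qed
    then show "\<exists>B'. finite B' \<and> B' \<subseteq> Qnn \<and> (\<forall>h'\<in>autQ. (\<forall>q\<in>B'. h' q = h q) \<longrightarrow>
        h' \<in> {x \<in> topspace autQ_topology. splitU x \<in> pw_nbhd d p0 A B})"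
      using Bs(1,2) p0(3,4) by (intro exI[where x="B \<union> Bs"]) auto
  qed
qed

lemma ex_dc_aut_extending:
  assumes h: "h \<in> autQ" and F: "finite F"
    and iso: "\<forall>a\<in>F. \<forall>b\<in>F. d (p a) (p b) = h (d a b)"
  shows "\<exists>f. (f, h) \<in> dc_aut d \<and> (\<forall>a\<in>F. f a = p a)"
proof -
  obtain f where f: "bij_betw f UNIV UNIV" "\<forall>x\<in>UNIV. \<forall>y\<in>UNIV. d (f x) (f y) = h (d x y)"
    "\<forall>a\<in>F. f a = p a"
    using back_and_forth_scaled[OF countable_UNIV countable_UNIV ultrametric_on_d ultrametric_on_d
        extension_property_on_d extension_property_on_d h F _ _ iso] by blast
  then have "(f, h) \<in> dc_aut d" using h by (intro dc_autI) auto
  then show ?thesis using f(3) by blast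
qed

lemma open_map_snd_aut: "open_map (aut_topology d) autQ_topology snd"
  unfolding open_map_def
proof (intro allI impI)
  fix W assume W: "openin (aut_topology d) W"
  have Wsub: "W \<subseteq> dc_aut d" using openin_subset[OF W] topspace_aut[of d] by simp
  show "openin autQ_topology (snd ` W)"
  proof (rule openin_autQI)
    show "snd ` W \<subseteq> autQ" using Wsub dc_autD(2) by blast
    fix h assume "h \<in> snd ` W"
    then obtain p where p: "p \<in> W" "h = snd p" by blast
    have pa: "p \<in> dc_aut d" using p(1) Wsub by blast
    obtain A B where AB: "finite A" "finite B" "B \<subseteq> Qnn" "pw_nbhd d p A B \<subseteq> W"
      using openin_aut_imp_pw_nbhd[OF W p(1)] by blast
    define B' where "B' = B \<union> (\<lambda>(a, b). d a b) ` (A \<times> A)"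
    have "finite B'" unfolding B'_def using AB(1,2) by simp
    moreover have "B' \<subseteq> Qnn" unfolding B'_def using AB(3) ultrametricD(1)[OF ultrametric_d]
      by (auto simp: Qnn_def)
    moreover have "h' \<in> snd ` W" if h': "h' \<in> autQ" "\<forall>q\<in>B'. h' q = h q" for h'
    proof -
      have "\<forall>a\<in>A. \<forall>b\<in>A. d (fst p a) (fst p b) = h' (d a b)"
        using h'(2) dc_autD(3)[OF pa] p(2) unfolding B'_def by force
      then obtain f where "(f, h') \<in> dc_aut d" "\<forall>a\<in>A. f a = fst p a"
        using ex_dc_aut_extending[OF h'(1) AB(1)] by blast
      then have "(f, h') \<in> pw_nbhd d p A B" unfolding pw_nbhd_def using h'(2) p(2) B'_def by auto
      then show ?thesis using AB(4) by (metis image_eqI snd_conv subsetD)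
    qed
    ultimately show "\<exists>B. finite B \<and> B \<subseteq> Qnn \<and> (\<forall>h'\<in>autQ. (\<forall>q\<in>B. h' q = h q) \<longrightarrow> h' \<in> snd ` W)"
      by blast
  qed
qed

theorem projection_splits_aut: "projection_splits d (aut_topology d)"
  by (rule projection_splitsI[OF topspace_aut continuous_map_snd_aut open_map_snd_aut
        continuous_map_dc_mult_aut hom_section_splitU continuous_map_splitU])

end

section \<open>Extending scaling maps to the completion\<close>

lemma inverse_Suc_eventually_less: fixes \<epsilon> :: rat assumes "0 < \<epsilon>" shows "\<exists>N. \<forall>n\<ge>N. inverse (of_nat (Suc n)) < \<epsilon>"
proof -
  obtain k :: nat where k: "0 < k" "inverse (of_nat k) < \<epsilon>" using ex_inverse_of_nat_less[OF assms] by blast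
  have "inverse (of_nat (Suc n) :: rat) < \<epsilon>" if "k \<le> n" for n
  proof -
    have "(of_nat k :: rat) \<le> of_nat (Suc n)" using that by simp
    then have "inverse (of_nat (Suc n) :: rat) \<le> inverse (of_nat k)"
      by (rule le_imp_inverse_le) (use k in simp)
    then show ?thesis using k(2) by simp
  qed
  then show ?thesis by blast
qed

locale completion =
  fixes d :: "'a \<Rightarrow> 'a \<Rightarrow> rat" and e :: "'b \<Rightarrow> 'b \<Rightarrow> rat" and j :: "'a \<Rightarrow> 'b"
  assumes comp: "is_completion d e j"
begin

lemma ultrametric_e: "ultrametric e" using comp unfolding is_completion_def by simp

lemma e_complete: "cauchy_seq_rat e x \<Longrightarrow> \<exists>y. converges_rat e x y"
  using comp unfolding is_completion_def by blast

lemma j_isometric: "e (j x) (j y) = d x y" using comp unfolding is_completion_def by blast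

lemma j_dense: "0 < \<epsilon> \<Longrightarrow> \<exists>x. e (j x) y < \<epsilon>" using comp unfolding is_completion_def by blast

lemma e_sym: "e x y = e y x" using ultrametricD(3)[OF ultrametric_e] .

definition extends_at :: "('a \<Rightarrow> 'a) \<Rightarrow> 'b \<Rightarrow> 'b \<Rightarrow> bool" where
  "extends_at g y z \<longleftrightarrow> (\<forall>\<epsilon>>0. \<exists>\<delta>>0. \<forall>x. e (j x) y < \<delta> \<longrightarrow> e (j (g x)) z < \<epsilon>)"

text \<open>Only meaningful for maps that scale distances, for which the limit exists and is unique.\<close>

definition cext :: "('a \<Rightarrow> 'a) \<Rightarrow> 'b \<Rightarrow> 'b" where
  "cext g y = (SOME z. extends_at g y z)"

lemma extends_at_unique: assumes "extends_at g y z" "extends_at g y z'" shows "z = z'"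
proof -
  have "e z z' < \<epsilon>" if eps: "0 < \<epsilon>" for \<epsilon>
  proof -
    obtain \<delta>1 where d1: "\<delta>1 > 0" "\<forall>x. e (j x) y < \<delta>1 \<longrightarrow> e (j (g x)) z < \<epsilon>"
      using assms(1) eps unfolding extends_at_def by blast
    obtain \<delta>2 where d2: "\<delta>2 > 0" "\<forall>x. e (j x) y < \<delta>2 \<longrightarrow> e (j (g x)) z' < \<epsilon>"
      using assms(2) eps unfolding extends_at_def by blast
    obtain x where x: "e (j x) y < min \<delta>1 \<delta>2" using j_dense[of "min \<delta>1 \<delta>2" y] d1(1) d2(1) by auto
    have "e (j (g x)) z < \<epsilon>" "e (j (g x)) z' < \<epsilon>" using x d1(2) d2(2) by auto
    then have "e z (j (g x)) < \<epsilon>" "e (j (g x)) z' < \<epsilon>" using e_sym by auto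
    then show ?thesis using ultrametric_less_trans[OF ultrametric_e] by blast
  qed
  then have "\<not> 0 < e z z'" by blast
  then have "e z z' = 0" using ultrametricD(1)[OF ultrametric_e, of z z'] by simp
  then show ?thesis using ultrametricD(2)[OF ultrametric_e] by simp
qed

definition scales :: "(rat \<Rightarrow> rat) \<Rightarrow> ('a \<Rightarrow> 'a) \<Rightarrow> bool" where
  "scales D g \<longleftrightarrow> D \<in> autQ \<and> (\<forall>x x'. d (g x) (g x') = D (d x x'))"

lemma scalesD: "scales D g \<Longrightarrow> D \<in> autQ" "scales D g \<Longrightarrow> d (g x) (g x') = D (d x x')"
  unfolding scales_def by auto

lemma scales_aut: assumes "p \<in> dc_aut d" shows "scales (snd p) (fst p)"
  unfolding scales_def using dc_autD(2,3)[OF assms] by simp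

lemma scales_close:
  assumes "scales D g" "0 < \<epsilon>" "e (j x) y < inv D \<epsilon>" "e (j x') y < inv D \<epsilon>"
  shows "e (j (g x)) (j (g x')) < \<epsilon>"
proof -
  have "e (j x) (j x') < inv D \<epsilon>" using assms(3,4) e_sym ultrametric_less_trans[OF ultrametric_e] by metis
  then show ?thesis using autQ_less_inv[OF scalesD(1)[OF assms(1)]] j_isometric scalesD(2)[OF assms(1)] by simp
qed

lemma extends_at_exists: assumes "scales D g" shows "\<exists>z. extends_at g y z"
proof -
  have D: "D \<in> autQ" using scalesD(1)[OF assms] .
  have "\<forall>n. \<exists>x. e (j x) y < inverse (of_nat (Suc n))" using j_dense by simp
  then obtain xs where xs: "\<And>n. e (j (xs n)) y < inverse (of_nat (Suc n))" by metis
  have xs_close: "\<exists>N. \<forall>n\<ge>N. e (j (xs n)) y < inv D \<epsilon>" if "0 < \<epsilon>" for \<epsilon>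
    using inverse_Suc_eventually_less[OF autQ_inv_pos[OF D that]] xs by (meson less_trans)
  have "cauchy_seq_rat e (\<lambda>n. j (g (xs n)))"
    unfolding cauchy_seq_rat_def using xs_close scales_close[OF assms] by metis
  then obtain z where z: "converges_rat e (\<lambda>n. j (g (xs n))) z" using e_complete by blast
  have "extends_at g y z"
    unfolding extends_at_def
  proof (intro allI impI)
    fix \<epsilon> :: rat assume "0 < \<epsilon>"
    obtain N1 where N1: "\<forall>n\<ge>N1. e (j (g (xs n))) z < \<epsilon>"
      using z \<open>0 < \<epsilon>\<close> unfolding converges_rat_def by blast
    obtain N2 where N2: "\<forall>n\<ge>N2. e (j (xs n)) y < inv D \<epsilon>" using xs_close[OF \<open>0 < \<epsilon>\<close>] by blast
    have "e (j (g x)) z < \<epsilon>" if "e (j x) y < inv D \<epsilon>" for x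
    proof -
      have "e (j (g x)) (j (g (xs (max N1 N2)))) < \<epsilon>"
        using scales_close[OF assms \<open>0 < \<epsilon>\<close> that] N2 by simp
      then show ?thesis using N1 ultrametric_less_trans[OF ultrametric_e] by simp
    qed
    then show "\<exists>\<delta>>0. \<forall>x. e (j x) y < \<delta> \<longrightarrow> e (j (g x)) z < \<epsilon>"
      using autQ_inv_pos[OF D \<open>0 < \<epsilon>\<close>] by blast
  qed
  then show ?thesis by blast
qed

lemma cext_extends_at: "scales D g \<Longrightarrow> extends_at g y (cext g y)"
  unfolding cext_def using extends_at_exists by (rule someI_ex)

lemma cext_unique:
  assumes "scales D g" "\<And>y y'. e (G y) (G y') = D (e y y')" "\<And>x. G (j x) = j (g x)"
  shows "G y = cext g y"
proof -
  have D: "D \<in> autQ" using scalesD(1)[OF assms(1)] .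
  have "extends_at g y (G y)"
    unfolding extends_at_def
  proof (intro allI impI)
    fix \<epsilon> :: rat assume "0 < \<epsilon>"
    have "e (j (g x)) (G y) < \<epsilon>" if "e (j x) y < inv D \<epsilon>" for x
      using assms(2)[of "j x" y] assms(3)[of x] autQ_less_inv[OF D that] by simp
    then show "\<exists>\<delta>>0. \<forall>x. e (j x) y < \<delta> \<longrightarrow> e (j (g x)) (G y) < \<epsilon>"
      using autQ_inv_pos[OF D \<open>0 < \<epsilon>\<close>] by blast
  qed
  then show ?thesis using extends_at_unique cext_extends_at[OF assms(1)] by blast
qed

lemma cext_embedding: assumes "scales D g" shows "cext g (j x) = j (g x)"
proof -
  have D: "D \<in> autQ" using scalesD(1)[OF assms] .
  have "extends_at g (j x) (j (g x))"
    unfolding extends_at_def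
  proof (intro allI impI)
    fix \<epsilon> :: rat assume "0 < \<epsilon>"
    have "e (j (g x')) (j (g x)) < \<epsilon>" if "e (j x') (j x) < inv D \<epsilon>" for x'
      using autQ_less_inv[OF D that] j_isometric scalesD(2)[OF assms] by simp
    then show "\<exists>\<delta>>0. \<forall>x'. e (j x') (j x) < \<delta> \<longrightarrow> e (j (g x')) (j (g x)) < \<epsilon>"
      using autQ_inv_pos[OF D \<open>0 < \<epsilon>\<close>] by blast
  qed
  then show ?thesis using extends_at_unique cext_extends_at[OF assms] by blast
qed

lemma cext_dist: assumes "scales D g" shows "e (cext g y) (cext g y') = D (e y y')"
proof (cases "y = y'")
  case True
  then show ?thesis using ultrametricD(5)[OF ultrametric_e] autQ_zero[OF scalesD(1)[OF assms]] by simp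
next
  case False
  have D: "D \<in> autQ" using scalesD(1)[OF assms] .
  define t where "t = e y y'"
  have tpos: "0 < t" using False ultrametricD(1,2)[OF ultrametric_e, of y y'] unfolding t_def by auto
  define r where "r = D t"
  have rpos: "0 < r" using autQ_pos_iff[OF D] tpos unfolding r_def by simp
  obtain \<delta>1 where d1: "\<delta>1 > 0" "\<forall>x. e (j x) y < \<delta>1 \<longrightarrow> e (j (g x)) (cext g y) < r"
    using cext_extends_at[OF assms, of y] rpos unfolding extends_at_def by blast
  obtain \<delta>2 where d2: "\<delta>2 > 0" "\<forall>x. e (j x) y' < \<delta>2 \<longrightarrow> e (j (g x)) (cext g y') < r"
    using cext_extends_at[OF assms, of y'] rpos unfolding extends_at_def by blast
  obtain x where x: "e (j x) y < min \<delta>1 t" using j_dense[of "min \<delta>1 t" y] d1(1) tpos by auto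
  obtain x' where x': "e (j x') y' < min \<delta>2 t" using j_dense[of "min \<delta>2 t" y'] d2(1) tpos by auto
  have "e (j x) (j x') = e y y'"
    using ultrametric_dist_stable[OF ultrametric_e, of y "j x" t y' "j x'"] x x' e_sym unfolding t_def by simp
  then have gxx: "e (j (g x)) (j (g x')) = r" using j_isometric scalesD(2)[OF assms] unfolding r_def t_def by simp
  have "e (j (g x)) (cext g y) < r" "e (j (g x')) (cext g y') < r" using d1 d2 x x' by auto
  then have "e (cext g y) (cext g y') = e (j (g x)) (j (g x'))"
    using ultrametric_dist_stable[OF ultrametric_e, of "j (g x)" "cext g y" r "j (g x')" "cext g y'"] gxx by simp
  then show ?thesis using gxx unfolding r_def t_def by simp
qed

lemma scales_comp: "scales D g \<Longrightarrow> scales D' g' \<Longrightarrow> scales (D \<circ> D') (g \<circ> g')"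
  unfolding scales_def using autQ_comp by auto

lemma cext_comp: assumes "scales D g" "scales D' g'" shows "cext (g \<circ> g') = cext g \<circ> cext g'"
proof
  fix y
  have "(cext g \<circ> cext g') y = cext (g \<circ> g') y"
  proof (rule cext_unique[OF scales_comp[OF assms]])
    show "e ((cext g \<circ> cext g') y) ((cext g \<circ> cext g') y') = (D \<circ> D') (e y y')" for y y'
      using cext_dist[OF assms(1)] cext_dist[OF assms(2)] by simp
    show "(cext g \<circ> cext g') (j x) = j ((g \<circ> g') x)" for x
      using cext_embedding[OF assms(1)] cext_embedding[OF assms(2)] by simp
  qed
  then show "cext (g \<circ> g') y = (cext g \<circ> cext g') y" by simp
qed

lemma scales_id: "scales id id" unfolding scales_def using autQ_id by simp

lemma cext_id: "cext id = id"
proof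
  fix y
  have "id y = cext id y" by (rule cext_unique[OF scales_id]) auto
  then show "cext id y = id y" by simp
qed

lemma scales_inv: assumes "scales D g" "bij g" shows "scales (inv D) (inv g)"
proof -
  have D: "D \<in> autQ" using scalesD(1)[OF assms(1)] .
  have "d (inv g x) (inv g x') = inv D (d x x')" for x x'
  proof -
    have "d x x' = D (d (inv g x) (inv g x'))"
      using scalesD(2)[OF assms(1), of "inv g x" "inv g x'"] bij_inv_eq_iff[OF assms(2)] by metis
    then show ?thesis using autQ_inv_f[OF D] by simp
  qed
  then show ?thesis unfolding scales_def using autQ_inv[OF D] by simp
qed

lemma cext_bij: assumes "scales D g" "bij g" shows "bij (cext g)"
proof -
  have 1: "cext g \<circ> cext (inv g) = id"
    using cext_comp[OF assms(1) scales_inv[OF assms]] cext_id bij_is_surj[OF assms(2)]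
    by (simp add: surj_iff)
  have 2: "cext (inv g) \<circ> cext g = id"
    using cext_comp[OF scales_inv[OF assms] assms(1)] cext_id bij_is_inj[OF assms(2)]
    by (simp add: inj_iff)
  show ?thesis using 2 1 by (rule o_bij)
qed

lemma cext_aut: assumes "p \<in> dc_aut d" shows "(cext (fst p), snd p) \<in> dc_aut e"
proof (rule dc_autI)
  show "bij (cext (fst p))" using cext_bij[OF scales_aut[OF assms] dc_autD(1)[OF assms]] .
  show "snd p \<in> autQ" using dc_autD(2)[OF assms] .
  show "e (cext (fst p) x) (cext (fst p) y) = snd p (e x y)" for x y using cext_dist[OF scales_aut[OF assms]] .
qed

end

locale urysohn_completion = rational_urysohn d + completion d e j
  for d :: "'a \<Rightarrow> 'a \<Rightarrow> rat" and e :: "'b \<Rightarrow> 'b \<Rightarrow> rat" and j :: "'a \<Rightarrow> 'b"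
begin

definition splitUbar :: "(rat \<Rightarrow> rat) \<Rightarrow> ('b \<Rightarrow> 'b) \<times> (rat \<Rightarrow> rat)" where
  "splitUbar h = (cext (fst (splitU h)), h)"

lemma splitUbar_aut: "h \<in> autQ \<Longrightarrow> splitUbar h \<in> dc_aut e"
  using cext_aut[OF splitU_aut] snd_splitU unfolding splitUbar_def by metis

lemma hom_section_splitUbar: "hom_section e splitUbar"
proof
  show "splitUbar h \<in> dc_aut e" if "h \<in> autQ" for h using splitUbar_aut[OF that] .
  show "snd (splitUbar h) = h" for h unfolding splitUbar_def by simp
  fix h h' assume h: "h \<in> autQ" "h' \<in> autQ"
  have "fst (splitU (h \<circ> h')) = fst (splitU h) \<circ> fst (splitU h')" using splitU_comp[OF h] unfolding dc_mult_def by simp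
  moreover have "cext (fst (splitU h) \<circ> fst (splitU h')) = cext (fst (splitU h)) \<circ> cext (fst (splitU h'))"
    using cext_comp[OF scales_aut[OF splitU_aut[OF h(1)]] scales_aut[OF splitU_aut[OF h(2)]]] .
  ultimately show "splitUbar (h \<circ> h') = dc_mult (splitUbar h) (splitUbar h')"
    unfolding splitUbar_def dc_mult_def by simp
qed

lemma splitUbar_embedding: "h \<in> autQ \<Longrightarrow> fst (splitUbar h) (j x) = j (fst (splitU h) x)"
  unfolding splitUbar_def using cext_embedding[OF scales_aut[OF splitU_aut]] by simp

lemma splitUbar_dist: assumes "h \<in> autQ" shows "e (fst (splitUbar h) y) (fst (splitUbar h) y') = h (e y y')"
  unfolding splitUbar_def using cext_dist[OF scales_aut[OF splitU_aut[OF assms]], of y y'] snd_splitU[of h] by simp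

lemma splitUbar_local:
  assumes "h \<in> autQ" "finite A" "0 < r"
  shows "\<exists>B. finite B \<and> B \<subseteq> Qnn \<and> (\<forall>h'\<in>autQ. (\<forall>q\<in>B. h' q = h q) \<longrightarrow>
           (\<forall>a\<in>A. e (fst (splitUbar h') a) (fst (splitUbar h) a) < r))"
proof -
  define \<epsilon> where "\<epsilon> = inv h r"
  have \<epsilon>pos: "0 < \<epsilon>" unfolding \<epsilon>_def using autQ_inv_pos[OF assms(1,3)] .
  have "\<forall>a. \<exists>x. e (j x) a < \<epsilon>" using j_dense[OF \<epsilon>pos] by simp
  then obtain xa where xa: "\<And>a. e (j (xa a)) a < \<epsilon>" by metis
  obtain Bs where Bs: "finite Bs" "Bs \<subseteq> Qnn"
    "\<forall>h'\<in>autQ. (\<forall>q\<in>Bs. h' q = h q) \<longrightarrow> (\<forall>a\<in>xa ` A. fst (splitU h') a = fst (splitU h) a)"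
    using splitU_local[OF assms(1) finite_imageI[OF assms(2), of xa]] by blast
  have "\<forall>a\<in>A. e (fst (splitUbar h') a) (fst (splitUbar h) a) < r"
    if h': "h' \<in> autQ" "\<forall>q\<in>insert \<epsilon> Bs. h' q = h q" for h'
  proof
    fix a assume "a \<in> A"
    have he: "h' \<epsilon> = r" using h'(2) autQ_f_inv[OF assms(1)] unfolding \<epsilon>_def by simp
    have "e a (j (xa a)) < \<epsilon>" using xa[of a] e_sym[of a "j (xa a)"] by simp
    then have "h' (e a (j (xa a))) < h' \<epsilon>" using autQ_less_iff[OF h'(1)] by simp
    then have 1: "e (fst (splitUbar h') a) (fst (splitUbar h') (j (xa a))) < r"
      using splitUbar_dist[OF h'(1), of a "j (xa a)"] he by simp
    have "\<forall>q\<in>Bs. h' q = h q" using h'(2) by simp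
    then have "\<forall>a\<in>xa ` A. fst (splitU h') a = fst (splitU h) a" using Bs(3) h'(1) by simp
    then have "fst (splitU h') (xa a) = fst (splitU h) (xa a)" using \<open>a \<in> A\<close> by simp
    then have 2: "fst (splitUbar h') (j (xa a)) = fst (splitUbar h) (j (xa a))"
      using splitUbar_embedding[OF h'(1)] splitUbar_embedding[OF assms(1)] by simp
    have "h (e (j (xa a)) a) < r" using autQ_less_inv[OF assms(1)] xa[of a] unfolding \<epsilon>_def by simp
    then have 3: "e (fst (splitUbar h) (j (xa a))) (fst (splitUbar h) a) < r"
      using splitUbar_dist[OF assms(1), of "j (xa a)" a] by simp
    show "e (fst (splitUbar h') a) (fst (splitUbar h) a) < r" using ultrametric_less_trans[OF ultrametric_e 1] 2 3 by simp
  qed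
  moreover have "finite (insert \<epsilon> Bs)" using Bs(1) by simp
  moreover have "insert \<epsilon> Bs \<subseteq> Qnn" using Bs(2) \<epsilon>pos unfolding Qnn_def by auto
  ultimately show ?thesis by (intro exI[where x="insert \<epsilon> Bs"]) simp
qed

lemma ex_dist_eq: assumes "0 < q" shows "\<exists>u v. e u v = q"
proof -
  have "\<exists>z\<in>UNIV. \<forall>a\<in>{undefined}. d z a = (\<lambda>_. q) a"
    using extension_property_on_d[unfolded extension_property_on_def, rule_format, of "{undefined}" "\<lambda>_. q"]
      assms ultrametricD(5)[OF ultrametric_d] by simp
  then obtain z where "d z undefined = q" by blast
  then show ?thesis using j_isometric by metis
qed

lemma continuous_map_splitUbar: "continuous_map autQ_topology (autM_topology e) splitUbar"
proof (rule continuous_map_into_autMI)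
  show "splitUbar x \<in> dc_aut e" if "x \<in> topspace autQ_topology" for x
    using that splitUbar_aut topspace_autQ by simp
  fix p0 and A :: "'b set" and r :: rat assume p0: "p0 \<in> dc_aut e" "finite A" "0 < r"
  show "openin autQ_topology {x \<in> topspace autQ_topology. splitUbar x \<in> dist_nbhd e p0 A r}"
    (is "openin _ ?S")
  proof (rule openin_autQI)
    show "?S \<subseteq> autQ" using topspace_autQ by simp
    fix h assume "h \<in> ?S"
    then have h: "h \<in> autQ" "splitUbar h \<in> dist_nbhd e p0 A r" using topspace_autQ by auto
    obtain B where B: "finite B" "B \<subseteq> Qnn" "\<forall>h'\<in>autQ. (\<forall>q\<in>B. h' q = h q) \<longrightarrow>
           (\<forall>a\<in>A. e (fst (splitUbar h') a) (fst (splitUbar h) a) < r)"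
      using splitUbar_local[OF h(1) p0(2,3)] by blast
    have "h' \<in> ?S" if h': "h' \<in> autQ" "\<forall>q\<in>B. h' q = h q" for h'
    proof -
      have 1: "\<forall>a\<in>A. e (fst (splitUbar h') a) (fst (splitUbar h) a) < r" using B(3) h' by blast
      have "splitUbar h' \<in> dist_nbhd e p0 A r"
        unfolding dist_nbhd_def
      proof (intro CollectI conjI ballI)
        show "splitUbar h' \<in> dc_aut e" using splitUbar_aut[OF h'(1)] .
        fix a assume "a \<in> A"
        have "e (fst (splitUbar h) a) (fst p0 a) < r" using h(2) \<open>a \<in> A\<close> unfolding dist_nbhd_def by simp
        then show "e (fst (splitUbar h') a) (fst p0 a) < r" using ultrametric_less_trans[OF ultrametric_e] 1 \<open>a \<in> A\<close> by blast
      qed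
      then show ?thesis using h'(1) topspace_autQ by simp
    qed
    then show "\<exists>B. finite B \<and> B \<subseteq> Qnn \<and> (\<forall>h'\<in>autQ. (\<forall>q\<in>B. h' q = h q) \<longrightarrow> h' \<in> ?S)"
      using B(1,2) by blast
  qed
qed

lemma dc_aut_approx_on_finite:
  assumes p: "p \<in> dc_aut e" and X0: "finite X0" and r: "0 < r"
  shows "\<exists>y. \<forall>x\<in>X0. e (j (y x)) (fst p (j x)) < r \<and> (\<forall>x'\<in>X0. d (y x) (y x') = snd p (d x x'))"
proof -
  define h where "h = snd p"
  have h: "h \<in> autQ" unfolding h_def using dc_autD(2)[OF p] .
  have p_dist: "e (fst p y) (fst p y') = h (e y y')" for y y' unfolding h_def using dc_autD(3)[OF p] .
  \<comment> \<open>approximating closer than every positive distance within \<open>fst p ` j ` X0\<close> preserves them all\<close>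
  define \<Delta> where "\<Delta> = (\<lambda>(x, x'). h (d x x')) ` {xx \<in> X0 \<times> X0. fst xx \<noteq> snd xx}"
  define \<delta> where "\<delta> = Min (insert r \<Delta>)"
  have f\<Delta>: "finite \<Delta>" unfolding \<Delta>_def using X0 by simp
  have "0 < t" if t: "t \<in> \<Delta>" for t
  proof -
    obtain x x' where "x \<noteq> x'" "t = h (d x x')" using t unfolding \<Delta>_def by auto
    then show ?thesis using ultrametricD(1,2)[OF ultrametric_d, of x x'] autQ_pos_iff[OF h] by auto
  qed
  then have \<delta>pos: "0 < \<delta>" unfolding \<delta>_def using f\<Delta> r by (simp add: Min_gr_iff)
  have \<delta>r: "\<delta> \<le> r" unfolding \<delta>_def using f\<Delta> by simp
  have \<delta>le: "\<delta> \<le> h (d x x')" if "x \<in> X0" "x' \<in> X0" "x \<noteq> x'" for x x'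
  proof -
    have "h (d x x') \<in> \<Delta>" unfolding \<Delta>_def using that by force
    then show ?thesis unfolding \<delta>_def using f\<Delta> by simp
  qed
  have "\<forall>x. \<exists>y. e (j y) (fst p (j x)) < \<delta>" using j_dense[OF \<delta>pos] by simp
  then obtain y where y: "\<And>x. e (j (y x)) (fst p (j x)) < \<delta>" by metis
  have "d (y x) (y x') = h (d x x')" if "x \<in> X0" "x' \<in> X0" for x x'
  proof (cases "x = x'")
    case True
    then show ?thesis using ultrametricD(5)[OF ultrametric_d] autQ_zero[OF h] by simp
  next
    case False
    have 1: "\<delta> \<le> e (fst p (j x)) (fst p (j x'))" using \<delta>le[OF that False] p_dist j_isometric by simp
    have "e (fst p (j x)) (j (y x)) < \<delta>" "e (fst p (j x')) (j (y x')) < \<delta>" using y e_sym by metis+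
    then have "e (j (y x)) (j (y x')) = e (fst p (j x)) (fst p (j x'))"
      using ultrametric_dist_stable[OF ultrametric_e _ _ 1] by blast
    then show ?thesis using p_dist j_isometric by simp
  qed
  then show ?thesis using y \<delta>r h_def by (meson order_less_le_trans)
qed

lemma open_map_snd_autM: "open_map (autM_topology e) autQ_topology snd"
  unfolding open_map_def
proof (intro allI impI)
  fix W assume W: "openin (autM_topology e) W"
  have Wsub: "W \<subseteq> dc_aut e" using openin_subset[OF W] topspace_autM[OF ultrametric_e] by simp
  show "openin autQ_topology (snd ` W)"
  proof (rule openin_autQI)
    show "snd ` W \<subseteq> autQ" using Wsub dc_autD(2) by blast
    fix h assume "h \<in> snd ` W"
    then obtain p where p: "p \<in> W" "h = snd p" by blast
    have pa: "p \<in> dc_aut e" using p(1) Wsub by blast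
    have D: "h \<in> autQ" using dc_autD(2)[OF pa] p(2) by simp
    obtain A r where A: "finite A" and r: "0 < r" and AW: "dist_nbhd e p A r \<subseteq> W"
      using openin_autM_imp_dist_nbhd[OF ultrametric_e W p(1)] by blast
    define \<epsilon> where "\<epsilon> = inv h r"
    have \<epsilon>pos: "0 < \<epsilon>" unfolding \<epsilon>_def using autQ_inv_pos[OF D r] .
    have "\<forall>a. \<exists>x. e (j x) a < \<epsilon>" using j_dense[OF \<epsilon>pos] by simp
    then obtain xa where xa: "\<And>a. e (j (xa a)) a < \<epsilon>" by metis
    define X0 where "X0 = xa ` A"
    have X0: "finite X0" unfolding X0_def using A by simp
    obtain y where y: "\<And>x. x \<in> X0 \<Longrightarrow> e (j (y x)) (fst p (j x)) < r"
      "\<And>x x'. x \<in> X0 \<Longrightarrow> x' \<in> X0 \<Longrightarrow> d (y x) (y x') = h (d x x')"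
      using dc_aut_approx_on_finite[OF pa X0 r] p(2) by blast
    define B where "B = insert \<epsilon> ((\<lambda>(x, x'). d x x') ` (X0 \<times> X0))"
    have "finite B" unfolding B_def using X0 by simp
    moreover have "B \<subseteq> Qnn" unfolding B_def Qnn_def using \<epsilon>pos ultrametricD(1)[OF ultrametric_d] by auto
    moreover have "h' \<in> snd ` W" if h': "h' \<in> autQ" "\<forall>q\<in>B. h' q = h q" for h'
    proof -
      have "\<forall>x\<in>X0. \<forall>x'\<in>X0. d (y x) (y x') = h' (d x x')" using y(2) h'(2) unfolding B_def by force
      then obtain f where fa: "(f, h') \<in> dc_aut d" and fy: "\<forall>x\<in>X0. f x = y x"
        using ex_dc_aut_extending[OF h'(1) X0] by blast
      have sc: "scales h' f" using scales_aut[OF fa] by simp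
      have h'\<epsilon>: "h' \<epsilon> = r" using h'(2) autQ_f_inv[OF D] unfolding B_def \<epsilon>_def by simp
      have "e (cext f a) (fst p a) < r" if "a \<in> A" for a
      proof -
        have "e a (j (xa a)) < \<epsilon>" using xa[of a] e_sym[of a "j (xa a)"] by simp
        then have "h' (e a (j (xa a))) < r" using autQ_less_iff[OF h'(1)] h'\<epsilon> by metis
        then have 1: "e (cext f a) (cext f (j (xa a))) < r" using cext_dist[OF sc] by simp
        have "xa a \<in> X0" unfolding X0_def using that by simp
        then have 2: "e (cext f (j (xa a))) (fst p (j (xa a))) < r" using cext_embedding[OF sc] fy y(1) by simp
        have "h (e (j (xa a)) a) < r" using autQ_less_inv[OF D] xa[of a] unfolding \<epsilon>_def by simp
        then have 3: "e (fst p (j (xa a))) (fst p a) < r" using dc_autD(3)[OF pa] p(2) by simp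
        show ?thesis using ultrametric_less_trans3[OF ultrametric_e 1 2 3] .
      qed
      then have "(cext f, h') \<in> dist_nbhd e p A r" using cext_aut[OF fa] unfolding dist_nbhd_def by simp
      then show ?thesis using AW by (metis image_eqI snd_conv subsetD)
    qed
    ultimately show "\<exists>B. finite B \<and> B \<subseteq> Qnn \<and> (\<forall>h'\<in>autQ. (\<forall>q\<in>B. h' q = h q) \<longrightarrow> h' \<in> snd ` W)"
      by blast
  qed
qed

theorem projection_splits_autM: "projection_splits e (autM_topology e)"
  proof -
  have csnd: "continuous_map (autM_topology e) autQ_topology snd"
    by (rule continuous_map_snd_autM[OF ultrametric_e ex_dist_eq])
  show ?thesis
    by (rule projection_splitsI[OF topspace_autM[OF ultrametric_e] csnd open_map_snd_autM
          continuous_map_dc_mult_autM[OF ultrametric_e csnd] hom_section_splitUbar continuous_map_splitUbar])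
qed

end

theorem theorem4p4:
  fixes d :: "'a \<Rightarrow> 'a \<Rightarrow> rat"
    and e :: "'b \<Rightarrow> 'b \<Rightarrow> rat"
    and j :: "'a \<Rightarrow> 'b"
  assumes "rational_urysohn_ultrametric d"
    and "is_completion d e j"
  shows "projection_splits d (aut_topology d) \<and> projection_splits e (autM_topology e)"
proof -
  interpret urysohn_completion d e j
    by (intro urysohn_completion.intro rational_urysohn.intro completion.intro assms)
  show ?thesis using projection_splits_aut projection_splits_autM by simp
qed

end
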